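(* Let $m\ge1$ and let $\pi$ be an $m$-colored permutation of length $n$. For each color $i\in\{0,\dots,m-1\}$ let $\lambda^{(i)}(\pi)=(\lambda^{(i)}_1\ge\lambda^{(i)}_2\ge\cdots)$ be the partition associated (via the Robinson–Schensted correspondence) to the subsequence of $\pi$ consisting of the entries of color $i$, with $\lambda^{(i)}_j=0$ for $j$ beyond its length. Then for each $k\ge1$, $\lambda_k(\pi)-k$ equals the $k$-th largest element of the multiset $\{m(\lambda^{(i)}_j(\pi)-j)+i:\ 0\le i\le m-1,\ j\ge1\}$. Moreover $(\lambda_1(\pi),\lambda_2(\pi),\dots)$ is a partition of $mn$.
   Context: An $m$-colored permutation of length $n$ is a permutation of $\{1,\dots,n\}$ in which each entry is assigned a color in $\{0,1,\dots,m-1\}$. A monochromatic increasing subsequence is an increasing subsequence all of whose entries have the same color; empty subsequences are allowed but still carry a color. Given a choice of $k$ pairwise disjoint monochromatic increasing subsequences, of which $k_i$ have color $i$ (so $k=\sum_ik_i$), whose union $S$ has $l$ entries, its score is $ml+\binom{k+1}{2}+\sum_{0\le i\le m-1}\big(ik_i-m\binom{k_i+1}{2}\big)$. Let $l_k(\pi)$ be the maximum score over all such choices of $k$ monochromatic increasing subsequences ($l_0(\pi)=0$), and $\lambda_k(\pi)=l_k(\pi)-l_{k-1}(\pi)$. *)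

theory Defs
  imports Main
begin

text \<open>An m-colored permutation of length n, in one-line notation: w is the list
  (pi(1),...,pi(n)) (positions 0..n-1), and c!p is the color of the entry at position p.\<close>
definition colored_perm :: "nat \<Rightarrow> nat \<Rightarrow> nat list \<Rightarrow> nat list \<Rightarrow> bool" where
  "colored_perm m n w c \<longleftrightarrow> length w = n \<and> length c = n \<and> distinct w \<and> set w = {1..n}
     \<and> (\<forall>p<n. c ! p < m)"

text \<open>A set S of positions forms a monochromatic increasing subsequence of color col
  (the empty set is allowed and still carries a color).\<close>
definition mono_incr :: "nat list \<Rightarrow> nat list \<Rightarrow> nat \<Rightarrow> nat set \<Rightarrow> bool" where
  "mono_incr w c col S \<longleftrightarrow> S \<subseteq> {..<length w} \<and> (\<forall>p\<in>S. c ! p = col)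
     \<and> (\<forall>p\<in>S. \<forall>q\<in>S. p < q \<longrightarrow> w ! p < w ! q)"

definition choices :: "nat \<Rightarrow> nat list \<Rightarrow> nat list \<Rightarrow> nat \<Rightarrow> (nat \<times> nat set) list set" where
  "choices m w c k = {L. length L = k
     \<and> (\<forall>a<k. fst (L ! a) < m \<and> mono_incr w c (fst (L ! a)) (snd (L ! a)))
     \<and> (\<forall>a<k. \<forall>b<k. a \<noteq> b \<longrightarrow> snd (L ! a) \<inter> snd (L ! b) = {})}"

definition num_color :: "(nat \<times> nat set) list \<Rightarrow> nat \<Rightarrow> nat" where
  "num_color L i = length (filter (\<lambda>x. fst x = i) L)"

definition score :: "nat \<Rightarrow> (nat \<times> nat set) list \<Rightarrow> int" where
  "score m L = int m * int (card (\<Union> (snd ` set L))) + int ((length L + 1) choose 2)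
     + (\<Sum>i<m. int i * int (num_color L i) - int m * int ((num_color L i + 1) choose 2))"

definition l_val :: "nat \<Rightarrow> nat list \<Rightarrow> nat list \<Rightarrow> nat \<Rightarrow> int" where
  "l_val m w c k = Max (score m ` choices m w c k)"

definition lam :: "nat \<Rightarrow> nat list \<Rightarrow> nat list \<Rightarrow> nat \<Rightarrow> int" where
  "lam m w c k = l_val m w c k - l_val m w c (k - 1)"

fun row_insert :: "nat \<Rightarrow> nat list \<Rightarrow> nat list \<times> nat option" where
  "row_insert x [] = ([x], None)"
| "row_insert x (y # ys) = (if x < y then (x # ys, Some y)
      else (let (r, b) = row_insert x ys in (y # r, b)))"

fun tab_insert :: "nat \<Rightarrow> nat list list \<Rightarrow> nat list list" where
  "tab_insert x [] = [[x]]"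
| "tab_insert x (r # rs) = (case row_insert x r of
      (r', None) \<Rightarrow> r' # rs
    | (r', Some y) \<Rightarrow> r' # tab_insert y rs)"

definition rs_tableau :: "nat list \<Rightarrow> nat list list" where
  "rs_tableau v = foldl (\<lambda>T x. tab_insert x T) [] v"

definition rs_shape :: "nat list \<Rightarrow> nat list" where
  "rs_shape v = map length (rs_tableau v)"

definition part :: "nat list \<Rightarrow> nat \<Rightarrow> nat" where
  "part sh j = (if 1 \<le> j \<and> j \<le> length sh then sh ! (j - 1) else 0)"

definition color_word :: "nat list \<Rightarrow> nat list \<Rightarrow> nat \<Rightarrow> nat list" where
  "color_word w c i = [w ! p. p \<leftarrow> [0..<length w], c ! p = i]"

text \<open>x is the k-th largest element of the multiset {f a : a in I} (with multiplicity).\<close>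
definition kth_largest :: "'a set \<Rightarrow> ('a \<Rightarrow> int) \<Rightarrow> nat \<Rightarrow> int \<Rightarrow> bool" where
  "kth_largest I f k x \<longleftrightarrow> finite {a\<in>I. f a \<ge> x} \<and> card {a\<in>I. f a > x} < k \<and> k \<le> card {a\<in>I. f a \<ge> x}"

definition is_partition_of :: "(nat \<Rightarrow> int) \<Rightarrow> nat \<Rightarrow> bool" where
  "is_partition_of f N \<longleftrightarrow> (\<forall>k\<ge>1. 0 \<le> f k \<and> f (Suc k) \<le> f k)
     \<and> (\<exists>K. (\<forall>k>K. f k = 0) \<and> (\<Sum>k=1..K. f k) = int N)"

end

(* Greene's theorem: for a word v with distinct letters, the largest union of t increasing
   subsequences of v has size \<lambda>1 + ... + \<lambda>t, where \<lambda> is the Robinson-Schensted shape of v.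
   It is checked directly on the reading word of a tableau (a column meets an increasing
   sequence at most once, and the first t rows are t increasing sequences), and it transfers
   to v because Knuth moves preserve these maximal sizes and relate v to the reading word
   of its insertion tableau.

   For the colored permutation, k_i monochromatic sequences of color i cover at most
   \<lambda>(i)1 + ... + \<lambda>(i)k_i entries, and rewriting the score through the weights
   m (\<lambda>(i)j - j) + i shows that a choice scores at most binomial(k+1, 2) plus the total
   weight of the staircase {(i, j). j <= k_i}. Weights decrease in j, so the k largest weights
   form such a staircase, and Greene's theorem realises it. Hence l_k is binomial(k+1, 2) plus
   the sum of the k largest weights, and l_k - l_(k-1) - k is the k-th largest weight. These
   decrease strictly, and beyond k = mn the k-th largest weight is -k, so the differences
   form a partition whose sum telescopes to l_(mn+1) = mn. *)

theory Submission
  imports Defs "HOL-Combinatorics.Transposition"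
begin

section \<open>Increasing labellings and Knuth equivalence\<close>

text \<open>A labelling represents the union S of the increasing subsequences
  {p \<in> S. f p = l} of v, one for each label l \<in> A.\<close>

definition incr_labelling :: "nat list \<Rightarrow> nat set \<Rightarrow> nat set \<Rightarrow> (nat \<Rightarrow> nat) \<Rightarrow> bool" where
  "incr_labelling v A S f \<longleftrightarrow> S \<subseteq> {..<length v} \<and> f ` S \<subseteq> A
     \<and> (\<forall>p\<in>S. \<forall>q\<in>S. p < q \<and> f p = f q \<longrightarrow> v ! p < v ! q)"

definition greene_le :: "nat list \<Rightarrow> nat list \<Rightarrow> bool" where
  "greene_le u v \<longleftrightarrow> (\<forall>A S f. incr_labelling u A S f \<longrightarrow>
     (\<exists>S' f'. incr_labelling v A S' f' \<and> card S' = card S))"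

lemma greene_le_refl: "greene_le u u"
  unfolding greene_le_def by blast

lemma greene_le_trans: "greene_le u v \<Longrightarrow> greene_le v w \<Longrightarrow> greene_le u w"
  unfolding greene_le_def by metis

lemma incr_labellingD:
  "incr_labelling v A S f \<Longrightarrow> p \<in> S \<Longrightarrow> q \<in> S \<Longrightarrow> p < q \<Longrightarrow> f p = f q \<Longrightarrow> v ! p < v ! q"
  unfolding incr_labelling_def by blast

lemma incr_labelling_le:
  "incr_labelling v A S f \<Longrightarrow> p \<in> S \<Longrightarrow> q \<in> S \<Longrightarrow> p \<le> q \<Longrightarrow> f p = f q \<Longrightarrow> v ! p \<le> v ! q"
  using incr_labellingD[of v A S f p q] by (cases "p = q") auto

lemma incr_labelling_subset: "incr_labelling v A S f \<Longrightarrow> S' \<subseteq> S \<Longrightarrow> incr_labelling v A S' f"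
  unfolding incr_labelling_def by blast

lemma incr_labelling_finite: "incr_labelling v A S f \<Longrightarrow> finite S"
  unfolding incr_labelling_def using finite_subset by blast

lemma incr_labelling_insert:
  assumes "incr_labelling v A S f" "p < length v" "l \<in> A"
    "\<And>b. b \<in> S \<Longrightarrow> b < p \<Longrightarrow> f b = l \<Longrightarrow> v ! b < v ! p"
    "\<And>b. b \<in> S \<Longrightarrow> p < b \<Longrightarrow> f b = l \<Longrightarrow> v ! p < v ! b"
  shows "incr_labelling v A (insert p S) (f(p := l))"
  using assms unfolding incr_labelling_def by (auto split: if_splits)

text \<open>Two chains may exchange their tails at a cut point as long as each head stays
  below the other tail.\<close>
lemma incr_labelling_exchange_tails:
  assumes "incr_labelling v A S f" and "l \<in> A" "l' \<in> A"
    and "\<And>a b. a \<in> S \<Longrightarrow> b \<in> S \<Longrightarrow> a < k \<Longrightarrow> k \<le> b \<Longrightarrow> f a = l \<Longrightarrow> f b = l' \<Longrightarrow> v ! a < v ! b"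
    and "\<And>a b. a \<in> S \<Longrightarrow> b \<in> S \<Longrightarrow> a < k \<Longrightarrow> k \<le> b \<Longrightarrow> f a = l' \<Longrightarrow> f b = l \<Longrightarrow> v ! a < v ! b"
  shows "incr_labelling v A S (\<lambda>r. if r < k then f r else Transposition.transpose l l' (f r))"
  using assms unfolding incr_labelling_def
  by (auto simp: transpose_def split: if_splits)

lemma transpose_Suc_less:
  fixes a b q :: nat
  assumes "Transposition.transpose q (Suc q) a < Transposition.transpose q (Suc q) b"
    and "\<not> (a = Suc q \<and> b = q)"
  shows "a < b"
  using assms by (auto simp: transpose_def split: if_splits)

lemma incr_labelling_swap_adjacent:
  assumes lab: "incr_labelling u A S f"
    and len: "length v = length u" and q: "Suc q < length u"
    and swap: "\<And>r. v ! r = u ! Transposition.transpose q (Suc q) r"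
    and untangled: "\<not> (q \<in> S \<and> Suc q \<in> S \<and> f q = f (Suc q))"
  shows "incr_labelling v A (Transposition.transpose q (Suc q) ` S) (f \<circ> Transposition.transpose q (Suc q))"
  unfolding incr_labelling_def
proof (intro conjI ballI impI)
  let ?\<tau> = "Transposition.transpose q (Suc q)"
  show "?\<tau> ` S \<subseteq> {..<length v}"
    using lab q len unfolding incr_labelling_def by (auto simp: transpose_def)
  show "(f \<circ> ?\<tau>) ` ?\<tau> ` S \<subseteq> A"
    using lab unfolding incr_labelling_def by (auto simp: image_iff)
  fix p r assume "p \<in> ?\<tau> ` S" "r \<in> ?\<tau> ` S" and pr: "p < r \<and> (f \<circ> ?\<tau>) p = (f \<circ> ?\<tau>) r"
  then obtain a b where ab: "a \<in> S" "b \<in> S" "p = ?\<tau> a" "r = ?\<tau> b" by auto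
  have "f a = f b" using pr ab by simp
  moreover have "\<not> (a = Suc q \<and> b = q)"
    using untangled ab(1,2) \<open>f a = f b\<close> by auto
  then have "a < b"
    using transpose_Suc_less[of q a b] pr ab by simp
  ultimately show "v ! p < v ! r"
    using incr_labellingD[OF lab ab(1,2)] ab swap by simp
qed

lemma greene_le_swap_adjacent:
  assumes len: "length v = length u" and q: "Suc q < length u"
    and swap: "\<And>r. v ! r = u ! Transposition.transpose q (Suc q) r"
    and untangle: "\<And>A S f. incr_labelling u A S f \<Longrightarrow> \<exists>S' f'. incr_labelling u A S' f'
       \<and> card S' = card S \<and> \<not> (q \<in> S' \<and> Suc q \<in> S' \<and> f' q = f' (Suc q))"
  shows "greene_le u v"
  unfolding greene_le_def
proof (intro allI impI)
  fix A S f assume "incr_labelling u A S f"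
  then obtain S' f' where S': "incr_labelling u A S' f'" "card S' = card S"
    "\<not> (q \<in> S' \<and> Suc q \<in> S' \<and> f' q = f' (Suc q))"
    using untangle by blast
  have "incr_labelling v A (Transposition.transpose q (Suc q) ` S') (f' \<circ> Transposition.transpose q (Suc q))"
    using incr_labelling_swap_adjacent[OF S'(1) len q swap S'(3)] .
  moreover have "card (Transposition.transpose q (Suc q) ` S') = card S"
    using S'(2) by (simp add: card_image)
  ultimately show "\<exists>S' f'. incr_labelling v A S' f' \<and> card S' = card S" by blast
qed

lemma greene_le_swap_descent:
  assumes "length v = length u" "Suc q < length u" "\<And>r. v ! r = u ! Transposition.transpose q (Suc q) r"
    and "u ! Suc q < u ! q"
  shows "greene_le u v"
proof (rule greene_le_swap_adjacent[OF assms(1-3)])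
  fix A S f assume lab: "incr_labelling u A S f"
  then have "\<not> (q \<in> S \<and> Suc q \<in> S \<and> f q = f (Suc q))"
    using incr_labellingD[OF lab, of q "Suc q"] assms(4) by auto
  then show "\<exists>S' f'. incr_labelling u A S' f' \<and> card S' = card S
    \<and> \<not> (q \<in> S' \<and> Suc q \<in> S' \<and> f' q = f' (Suc q))" using lab by blast
qed

text \<open>If x and z lie on one chain, either y is unused and takes the place of x, or y lies on
  a second chain and the two chains exchange their tails behind x. Either way x and z end up
  on different chains, so that swapping them is harmless.\<close>
lemma knuth1_untangle:
  assumes xy: "x < y" and yz: "y < z" and lab: "incr_labelling (p @ [y, x, z] @ s) A S f"
  shows "\<exists>S' f'. incr_labelling (p @ [y, x, z] @ s) A S' f' \<and> card S' = card S
    \<and> \<not> (Suc (length p) \<in> S' \<and> Suc (Suc (length p)) \<in> S' \<and> f' (Suc (length p)) = f' (Suc (Suc (length p))))"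
proof (cases "Suc (length p) \<in> S \<and> Suc (Suc (length p)) \<in> S \<and> f (Suc (length p)) = f (Suc (Suc (length p)))")
  case False
  then show ?thesis using lab by blast
next
  case True
  let ?u = "p @ [y, x, z] @ s" and ?P = "length p"
  have u: "?u ! ?P = y" "?u ! Suc ?P = x" "?u ! Suc (Suc ?P) = z"
    by (simp_all add: nth_append)
  have fin: "finite S" using lab by (rule incr_labelling_finite)
  define l where "l = f (Suc ?P)"
  have lA: "l \<in> A" using lab True unfolding incr_labelling_def l_def by auto
  have before_x: "?u ! a \<le> x" if "a \<in> S" "a \<le> Suc ?P" "f a = l" for a
    using incr_labelling_le[OF lab that(1) _ that(2)] True that(3) u unfolding l_def by simp
  have after_z: "z \<le> ?u ! b" if "b \<in> S" "Suc (Suc ?P) \<le> b" "f b = l" for b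
    using incr_labelling_le[OF lab _ that(1) that(2)] True that(3) u unfolding l_def by simp
  show ?thesis
  proof (cases "?P \<in> S")
    case False
    have "incr_labelling ?u A (insert ?P (S - {Suc ?P})) (f(?P := l))"
    proof (rule incr_labelling_insert[OF incr_labelling_subset[OF lab] _ lA])
      fix b assume "b \<in> S - {Suc ?P}" "b < ?P" "f b = l"
      then show "?u ! b < ?u ! ?P" using before_x[of b] u xy by simp
    next
      fix b assume "b \<in> S - {Suc ?P}" "?P < b" "f b = l"
      then show "?u ! ?P < ?u ! b" using after_z[of b] u yz by simp
    qed auto
    moreover have "card (insert ?P (S - {Suc ?P})) = card S"
      using False \<open>Suc ?P \<in> S \<and> _\<close> fin card_Suc_Diff1[of S "Suc ?P"] by simp
    ultimately show ?thesis
      by (intro exI[of _ "insert ?P (S - {Suc ?P})"] exI[of _ "f(?P := l)"]) simp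
  next
    case True
    define l' where "l' = f ?P"
    have l'A: "l' \<in> A" using lab True unfolding incr_labelling_def l'_def by auto
    have "l' \<noteq> l"
      using incr_labellingD[OF lab True] \<open>Suc ?P \<in> S \<and> _\<close> u xy unfolding l_def l'_def by fastforce
    have before_y: "?u ! a \<le> y" if "a \<in> S" "a < Suc (Suc ?P)" "f a = l'" for a
    proof -
      have "a \<noteq> Suc ?P" using that(3) \<open>l' \<noteq> l\<close> unfolding l_def by auto
      then show ?thesis using incr_labelling_le[OF lab that(1) True] that u unfolding l'_def by simp
    qed
    have after_y: "y < ?u ! b" if "b \<in> S" "Suc (Suc ?P) \<le> b" "f b = l'" for b
      using incr_labellingD[OF lab True that(1)] that u unfolding l'_def by simp
    let ?f' = "\<lambda>r. if r < Suc (Suc ?P) then f r else Transposition.transpose l l' (f r)"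
    have "incr_labelling ?u A S ?f'"
    proof (rule incr_labelling_exchange_tails[OF lab lA l'A])
      fix a b assume "a \<in> S" "b \<in> S" "a < Suc (Suc ?P)" "Suc (Suc ?P) \<le> b" "f a = l" "f b = l'"
      then show "?u ! a < ?u ! b" using before_x[of a] after_y[of b] xy by simp
    next
      fix a b assume "a \<in> S" "b \<in> S" "a < Suc (Suc ?P)" "Suc (Suc ?P) \<le> b" "f a = l'" "f b = l"
      then show "?u ! a < ?u ! b" using before_y[of a] after_z[of b] yz by simp
    qed
    moreover have "?f' (Suc ?P) = l" "?f' (Suc (Suc ?P)) = l'"
      using \<open>Suc ?P \<in> S \<and> _\<close> unfolding l_def by simp_all
    ultimately show ?thesis
      using \<open>l' \<noteq> l\<close> by (intro exI[of _ S] exI[of _ ?f']) simp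
  qed
qed

lemma knuth2_untangle:
  assumes xy: "x < y" and yz: "y < z" and lab: "incr_labelling (p @ [x, z, y] @ s) A S f"
  shows "\<exists>S' f'. incr_labelling (p @ [x, z, y] @ s) A S' f' \<and> card S' = card S
    \<and> \<not> (length p \<in> S' \<and> Suc (length p) \<in> S' \<and> f' (length p) = f' (Suc (length p)))"
proof (cases "length p \<in> S \<and> Suc (length p) \<in> S \<and> f (length p) = f (Suc (length p))")
  case False
  then show ?thesis using lab by blast
next
  case True
  let ?u = "p @ [x, z, y] @ s" and ?P = "length p"
  have u: "?u ! ?P = x" "?u ! Suc ?P = z" "?u ! Suc (Suc ?P) = y"
    by (simp_all add: nth_append)
  have fin: "finite S" using lab by (rule incr_labelling_finite)
  define l where "l = f ?P"
  have lA: "l \<in> A" using lab True unfolding incr_labelling_def l_def by auto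
  have before_x: "?u ! a \<le> x" if "a \<in> S" "a \<le> ?P" "f a = l" for a
    using incr_labelling_le[OF lab that(1) _ that(2)] True that(3) u unfolding l_def by simp
  have after_z: "z \<le> ?u ! b" if "b \<in> S" "Suc ?P \<le> b" "f b = l" for b
    using incr_labelling_le[OF lab _ that(1) that(2)] True that(3) u unfolding l_def by simp
  show ?thesis
  proof (cases "Suc (Suc ?P) \<in> S")
    case False
    have "incr_labelling ?u A (insert (Suc (Suc ?P)) (S - {Suc ?P})) (f(Suc (Suc ?P) := l))"
    proof (rule incr_labelling_insert[OF incr_labelling_subset[OF lab] _ lA])
      fix b assume "b \<in> S - {Suc ?P}" "b < Suc (Suc ?P)" "f b = l"
      then show "?u ! b < ?u ! Suc (Suc ?P)" using before_x[of b] u xy by simp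
    next
      fix b assume "b \<in> S - {Suc ?P}" "Suc (Suc ?P) < b" "f b = l"
      then show "?u ! Suc (Suc ?P) < ?u ! b" using after_z[of b] u yz by simp
    qed auto
    moreover have "card (insert (Suc (Suc ?P)) (S - {Suc ?P})) = card S"
      using False \<open>?P \<in> S \<and> _\<close> fin card_Suc_Diff1[of S "Suc ?P"] by simp
    ultimately show ?thesis
      by (intro exI[of _ "insert (Suc (Suc ?P)) (S - {Suc ?P})"] exI[of _ "f(Suc (Suc ?P) := l)"]) simp
  next
    case True
    define l' where "l' = f (Suc (Suc ?P))"
    have l'A: "l' \<in> A" using lab True unfolding incr_labelling_def l'_def by auto
    have "l' \<noteq> l"
      using incr_labellingD[OF lab _ True] \<open>?P \<in> S \<and> _\<close> u yz unfolding l_def l'_def by fastforce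
    have before_y: "?u ! a < y" if "a \<in> S" "a < Suc ?P" "f a = l'" for a
      using incr_labellingD[OF lab that(1) True] that u unfolding l'_def by simp
    have after_y: "y \<le> ?u ! b" if "b \<in> S" "Suc ?P \<le> b" "f b = l'" for b
    proof -
      have "b \<noteq> Suc ?P" using that(3) \<open>l' \<noteq> l\<close> \<open>?P \<in> S \<and> _\<close> unfolding l_def by auto
      then show ?thesis using incr_labelling_le[OF lab True that(1)] that u unfolding l'_def by simp
    qed
    let ?f' = "\<lambda>r. if r < Suc ?P then f r else Transposition.transpose l l' (f r)"
    have "incr_labelling ?u A S ?f'"
    proof (rule incr_labelling_exchange_tails[OF lab lA l'A])
      fix a b assume "a \<in> S" "b \<in> S" "a < Suc ?P" "Suc ?P \<le> b" "f a = l" "f b = l'"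
      then show "?u ! a < ?u ! b" using before_x[of a] after_y[of b] xy by simp
    next
      fix a b assume "a \<in> S" "b \<in> S" "a < Suc ?P" "Suc ?P \<le> b" "f a = l'" "f b = l"
      then show "?u ! a < ?u ! b" using before_y[of a] after_z[of b] yz by simp
    qed
    moreover have "?f' ?P = l" "?f' (Suc ?P) = l'"
      using \<open>?P \<in> S \<and> _\<close> unfolding l_def by simp_all
    ultimately show ?thesis
      using \<open>l' \<noteq> l\<close> by (intro exI[of _ S] exI[of _ ?f']) simp
  qed
qed

lemma nth_append_swap:
  "(p @ [b, a] @ s) ! r = (p @ [a, b] @ s) ! Transposition.transpose (length p) (Suc (length p)) r"
  by (cases "r < length p") (auto simp: nth_append transpose_def nth_Cons split: nat.split)

inductive knuth_step :: "nat list \<Rightarrow> nat list \<Rightarrow> bool" where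
  knuth1: "x < y \<Longrightarrow> y < z \<Longrightarrow> knuth_step (p @ [y, x, z] @ s) (p @ [y, z, x] @ s)"
| knuth2: "x < y \<Longrightarrow> y < z \<Longrightarrow> knuth_step (p @ [x, z, y] @ s) (p @ [z, x, y] @ s)"

lemma knuth_step_greene_le:
  assumes "knuth_step u v"
  shows "greene_le u v \<and> greene_le v u"
  using assms
proof induction
  case (knuth1 x y z p s)
  have swap: "(p @ [y, z, x] @ s) ! r = (p @ [y, x, z] @ s) ! Transposition.transpose (Suc (length p)) (Suc (Suc (length p))) r"
    "(p @ [y, x, z] @ s) ! r = (p @ [y, z, x] @ s) ! Transposition.transpose (Suc (length p)) (Suc (Suc (length p))) r" for r
    using nth_append_swap[of "p @ [y]" z x s r] nth_append_swap[of "p @ [y]" x z s r] by simp_all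
  have "greene_le (p @ [y, x, z] @ s) (p @ [y, z, x] @ s)"
    by (rule greene_le_swap_adjacent[OF _ _ swap(1) knuth1_untangle[OF knuth1]]) simp_all
  moreover have "greene_le (p @ [y, z, x] @ s) (p @ [y, x, z] @ s)"
    by (rule greene_le_swap_descent[OF _ _ swap(2)]) (use knuth1 in \<open>simp_all add: nth_append\<close>)
  ultimately show ?case ..
next
  case (knuth2 x y z p s)
  have swap: "(p @ [z, x, y] @ s) ! r = (p @ [x, z, y] @ s) ! Transposition.transpose (length p) (Suc (length p)) r"
    "(p @ [x, z, y] @ s) ! r = (p @ [z, x, y] @ s) ! Transposition.transpose (length p) (Suc (length p)) r" for r
    using nth_append_swap[of p x z "y # s" r] nth_append_swap[of p z x "y # s" r] by simp_all
  have "greene_le (p @ [x, z, y] @ s) (p @ [z, x, y] @ s)"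
    by (rule greene_le_swap_adjacent[OF _ _ swap(1) knuth2_untangle[OF knuth2]]) simp_all
  moreover have "greene_le (p @ [z, x, y] @ s) (p @ [x, z, y] @ s)"
    by (rule greene_le_swap_descent[OF _ _ swap(2)]) (use knuth2 in \<open>simp_all add: nth_append\<close>)
  ultimately show ?case ..
qed

lemma knuth_equiv_greene_le: "equivclp knuth_step u v \<Longrightarrow> greene_le u v"
proof (induction rule: equivclp_induct)
  case base
  then show ?case by (rule greene_le_refl)
next
  case (step v w)
  then show ?case using knuth_step_greene_le greene_le_trans by blast
qed

lemma knuth_step_append: "knuth_step u v \<Longrightarrow> knuth_step (a @ u @ b) (a @ v @ b)"
proof (induction rule: knuth_step.induct)
  case (knuth1 x y z p s)
  then show ?case using knuth_step.knuth1[of x y z "a @ p" "s @ b"] by simp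
next
  case (knuth2 x y z p s)
  then show ?case using knuth_step.knuth2[of x y z "a @ p" "s @ b"] by simp
qed

lemma knuth_equiv_append: "equivclp knuth_step u v \<Longrightarrow> equivclp knuth_step (a @ u @ b) (a @ v @ b)"
proof (induction rule: equivclp_induct)
  case (step v w)
  then show ?case using knuth_step_append equivclp_into_equivclp by metis
qed simp

lemma knuth_step_set_length: "knuth_step u v \<Longrightarrow> set u = set v \<and> length u = length v"
  by (induction rule: knuth_step.induct) auto

lemma knuth_equiv_set_length:
  "equivclp knuth_step u v \<Longrightarrow> set u = set v \<and> length u = length v"
  by (induction rule: equivclp_induct) (auto dest: knuth_step_set_length)

lemma knuth_equiv_distinct: "equivclp knuth_step u v \<Longrightarrow> distinct v \<Longrightarrow> distinct u"
  using knuth_equiv_set_length by (metis card_distinct distinct_card)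

lemma knuth_equiv_move_small_left:
  "sorted_wrt (<) (a # v) \<Longrightarrow> x < a \<Longrightarrow> equivclp knuth_step (a # v @ [x]) (a # x # v)"
proof (induction v arbitrary: a)
  case Nil
  then show ?case by simp
next
  case (Cons b v)
  have "a < b" using Cons.prems by simp
  have "equivclp knuth_step (b # v @ [x]) (b # x # v)"
    using Cons \<open>a < b\<close> by simp
  then have "equivclp knuth_step (a # b # v @ [x]) (a # b # x # v)"
    using knuth_equiv_append[of _ _ "[a]" "[]"] by simp
  also have "knuth_step ([] @ [a, x, b] @ v) ([] @ [a, b, x] @ v)"
    using Cons.prems \<open>a < b\<close> by (intro knuth_step.knuth1) auto
  then have "equivclp knuth_step (a # b # x # v) (a # x # b # v)"
    by auto
  finally show ?case by simp
qed

lemma knuth_equiv_move_big_left: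
  "sorted_wrt (<) (u @ [b]) \<Longrightarrow> b < y \<Longrightarrow> equivclp knuth_step (u @ y # b # s) (y # u @ b # s)"
proof (induction u arbitrary: b s rule: rev_induct)
  case Nil
  then show ?case by simp
next
  case (snoc a u)
  have "a < b" and sorted: "sorted_wrt (<) (u @ [a])"
    using snoc.prems by (auto simp: sorted_wrt_append)
  have "knuth_step (u @ [a, y, b] @ s) (u @ [y, a, b] @ s)"
    using snoc.prems \<open>a < b\<close> by (intro knuth_step.knuth2) auto
  then have "equivclp knuth_step ((u @ [a]) @ y # b # s) (u @ y # a # b # s)"
    by auto
  also have "equivclp knuth_step (u @ y # a # b # s) (y # u @ a # b # s)"
    using snoc.IH[OF sorted] \<open>a < b\<close> snoc.prems by simp
  finally show ?case by simp
qed

section \<open>Robinson-Schensted insertion\<close>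

text \<open>One bump: inserting x into the row u @ y # v replaces y by x and passes y on to the
  next row.\<close>
lemma knuth_equiv_bump:
  assumes "sorted_wrt (<) (u @ y # v)" "\<forall>e\<in>set u. e < x" "x < y"
  shows "equivclp knuth_step (u @ y # v @ [x]) (y # u @ x # v)"
proof -
  have "sorted_wrt (<) (y # v)" using assms(1) by (simp add: sorted_wrt_append)
  then have "equivclp knuth_step (y # v @ [x]) (y # x # v)"
    using knuth_equiv_move_small_left assms(3) by blast
  then have "equivclp knuth_step (u @ y # v @ [x]) (u @ y # x # v)"
    using knuth_equiv_append[of _ _ u "[]"] by simp
  also have "sorted_wrt (<) (u @ [x])" using assms(1,2) by (simp add: sorted_wrt_append)
  then have "equivclp knuth_step (u @ y # x # v) (y # u @ x # v)"
    using knuth_equiv_move_big_left assms(3) by blast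
  finally show ?thesis .
qed

definition reading_word :: "nat list list \<Rightarrow> nat list" where
  "reading_word T = concat (rev T)"

lemma reading_word_Nil [simp]: "reading_word [] = []"
  and reading_word_Cons [simp]: "reading_word (r # rs) = reading_word rs @ r"
  by (simp_all add: reading_word_def)

definition dominates :: "nat list \<Rightarrow> nat list \<Rightarrow> bool" where
  "dominates r s \<longleftrightarrow> length s \<le> length r \<and> (\<forall>d<length s. r ! d < s ! d)"

fun tableau :: "nat list list \<Rightarrow> bool" where
  "tableau [] \<longleftrightarrow> True"
| "tableau (r # rs) \<longleftrightarrow> r \<noteq> [] \<and> sorted_wrt (<) r \<and> tableau rs \<and> (rs = [] \<or> dominates r (hd rs))"

lemma row_insert_None:
  "row_insert x r = (r', None) \<Longrightarrow> r' = r @ [x] \<and> (\<forall>e\<in>set r. \<not> x < e)"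
  by (induction r arbitrary: r') (auto split: if_splits prod.splits)

lemma row_insert_Some:
  "row_insert x r = (r', Some y) \<Longrightarrow>
    \<exists>u v. r = u @ y # v \<and> r' = u @ x # v \<and> (\<forall>e\<in>set u. \<not> x < e) \<and> x < y"
proof (induction r arbitrary: r')
  case (Cons a r)
  show ?case
  proof (cases "x < a")
    case True
    then show ?thesis using Cons.prems by (intro exI[of _ "[]"] exI[of _ r]) auto
  next
    case False
    then obtain r1 where r1: "row_insert x r = (r1, Some y)" "r' = a # r1"
      using Cons.prems by (auto split: prod.splits)
    then obtain u v where "r = u @ y # v \<and> r1 = u @ x # v \<and> (\<forall>e\<in>set u. \<not> x < e) \<and> x < y"
      using Cons.IH by blast
    then show ?thesis using r1 False by (intro exI[of _ "a # u"] exI[of _ v]) auto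
  qed
qed simp

lemma row_insert_None_nth:
  assumes "row_insert x r = (r', None)" "x \<notin> set r"
  shows "r' = r @ [x] \<and> (\<forall>d<length r. r ! d < x)"
  using row_insert_None[OF assms(1)] assms(2) by (metis linorder_neqE_nat nth_mem)

lemma row_insert_Some_nth:
  assumes "row_insert x r = (r', Some y)" "x \<notin> set r"
  shows "\<exists>c<length r. y = r ! c \<and> r' = r[c := x] \<and> (\<forall>d<c. r ! d < x) \<and> x < y"
proof -
  obtain u v where uv: "r = u @ y # v" "r' = u @ x # v" "\<forall>e\<in>set u. \<not> x < e" "x < y"
    using row_insert_Some[OF assms(1)] by blast
  have "\<forall>e\<in>set u. e < x" using uv(1,3) assms(2) by (metis Un_iff linorder_neqE_nat set_append)
  then have "\<forall>d<length u. r ! d < x" using uv(1) by (simp add: nth_append)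
  then show ?thesis using uv by (intro exI[of _ "length u"]) auto
qed

lemma sorted_wrt_less_list_update:
  fixes r :: "nat list"
  assumes "sorted_wrt (<) r" "c < length r" "\<forall>d<c. r ! d < x" "x < r ! c"
  shows "sorted_wrt (<) (r[c := x])"
  unfolding sorted_wrt_iff_nth_less
proof (intro allI impI)
  fix i j assume ij: "i < j" "j < length (r[c := x])"
  have "r ! i < r ! j" using assms(1) ij unfolding sorted_wrt_iff_nth_less by simp
  moreover have "r ! c < r ! j" if "i = c" using assms(1) ij that unfolding sorted_wrt_iff_nth_less by simp
  ultimately show "r[c := x] ! i < r[c := x] ! j"
    using ij assms(3,4) by (cases "i = c"; cases "j = c") auto
qed

lemma dominates_row_insert:
  assumes r: "sorted_wrt (<) r" "c < length r" "x < r ! c" "\<forall>d<c. r ! d < x"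
    and s: "dominates r s" "sorted_wrt (<) s" "r ! c \<notin> set s"
    and ins: "row_insert (r ! c) s = (s', b)"
  shows "dominates (r[c := x]) s'"
proof -
  let ?y = "r ! c"
  have below_y: "r[c := x] ! d < ?y" if "d \<le> c" for d
    using r that unfolding sorted_wrt_iff_nth_less by (cases "d = c") auto
  have le: "r[c := x] ! d \<le> r ! d" if "d < length r" for d
    using r(3) that by (cases "d = c") auto
  have dom: "length s \<le> length r" "\<forall>d<length s. r ! d < s ! d"
    using s(1) unfolding dominates_def by auto
  show ?thesis
  proof (cases b)
    case None
    then have s': "s' = s @ [?y]" "\<forall>d<length s. s ! d < ?y"
      using row_insert_None_nth[of ?y s s'] ins s(3) by auto
    have "length s \<le> c"
      using dom s'(2) by (metis leI less_asym)
    then show ?thesis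
      using dom s' below_y le_less_trans[OF le] r(2) unfolding dominates_def
      by (auto simp: nth_append less_Suc_eq)
  next
    case (Some z)
    then obtain c' where c': "c' < length s" "s' = s[c' := ?y]" "\<forall>d<c'. s ! d < ?y"
      using row_insert_Some_nth[of ?y s s' z] ins s(3) by auto
    have "c' \<le> c"
    proof (rule ccontr)
      assume "\<not> c' \<le> c"
      then have "s ! c < ?y" "?y < s ! c" using c' dom by auto
      then show False by simp
    qed
    then show ?thesis
      using dom c' below_y le_less_trans[OF le] unfolding dominates_def
      by (auto simp: nth_list_update)
  qed
qed

lemma knuth_equiv_tab_insert:
  "tableau T \<Longrightarrow> distinct (reading_word T @ [x]) \<Longrightarrow>
    equivclp knuth_step (reading_word (tab_insert x T)) (reading_word T @ [x])"
proof (induction T arbitrary: x)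
  case (Cons r rs)
  obtain r' b where ins: "row_insert x r = (r', b)" by fastforce
  show ?case
  proof (cases b)
    case None
    then show ?thesis using ins row_insert_None[OF ins[unfolded None]] by simp
  next
    case (Some y)
    obtain u v where uv: "r = u @ y # v" "r' = u @ x # v" "\<forall>e\<in>set u. \<not> x < e" "x < y"
      using row_insert_Some ins Some by blast
    have "\<forall>e\<in>set u. e < x" using uv(1,3) Cons.prems(2) by fastforce
    have "equivclp knuth_step (reading_word (tab_insert x (r # rs))) (reading_word (tab_insert y rs) @ r')"
      using ins Some by simp
    also have "equivclp knuth_step \<dots> (reading_word rs @ [y] @ r')"
    proof -
      have "distinct (reading_word rs @ [y])" using Cons.prems(2) uv(1) by auto
      then have "equivclp knuth_step (reading_word (tab_insert y rs)) (reading_word rs @ [y])"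
        using Cons.IH Cons.prems(1) by simp
      from knuth_equiv_append[OF this, of "[]" r'] show ?thesis by simp
    qed
    also have "equivclp knuth_step \<dots> (reading_word rs @ r @ [x])"
      using knuth_equiv_bump[of u y v x] Cons.prems(1) uv \<open>\<forall>e\<in>set u. e < x\<close>
        knuth_equiv_append[of _ _ "reading_word rs" "[]"] equivclp_sym by fastforce
    finally show ?thesis by simp
  qed
qed simp

lemma tableau_tab_insert:
  "tableau T \<Longrightarrow> distinct (reading_word T @ [x]) \<Longrightarrow> tableau (tab_insert x T)"
proof (induction T arbitrary: x)
  case (Cons r rs)
  have r: "r \<noteq> []" "sorted_wrt (<) r" "tableau rs" "rs = [] \<or> dominates r (hd rs)"
    and "x \<notin> set r" using Cons.prems by auto
  obtain r' b where ins: "row_insert x r = (r', b)" by fastforce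
  show ?case
  proof (cases b)
    case None
    then have r': "r' = r @ [x]" "\<forall>d<length r. r ! d < x"
      using row_insert_None_nth ins \<open>x \<notin> set r\<close> by auto
    have "sorted_wrt (<) (r @ [x])"
      using r(2) r'(2) by (auto simp: sorted_wrt_append in_set_conv_nth)
    moreover have "rs = [] \<or> dominates (r @ [x]) (hd rs)"
      using r(4) unfolding dominates_def by (auto simp: nth_append)
    ultimately show ?thesis using ins None r' r by simp
  next
    case (Some y)
    obtain c where c: "c < length r" "y = r ! c" "r' = r[c := x]" "\<forall>d<c. r ! d < x" "x < y"
      using row_insert_Some_nth ins Some \<open>x \<notin> set r\<close> by blast
    have "y \<notin> set (reading_word rs)" using Cons.prems(2) c(1,2) by auto
    have "dominates (r[c := x]) (hd (tab_insert y rs))"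
    proof (cases rs)
      case Nil
      then show ?thesis
        using dominates_row_insert[OF r(2) c(1) _ c(4), of "[]"] c by (simp add: dominates_def)
    next
      case (Cons s ss)
      obtain s' b' where "row_insert y s = (s', b')" by fastforce
      moreover have "dominates r s" "sorted_wrt (<) s" "y \<notin> set s"
        using r Cons \<open>y \<notin> _\<close> by auto
      ultimately show ?thesis
        using dominates_row_insert[OF r(2) c(1) _ c(4)] c Cons by (cases b') auto
    qed
    moreover have "distinct (reading_word rs @ [y])"
      using Cons.prems(2) c(1,2) by auto
    then have "tableau (tab_insert y rs)"
      using Cons.IH[OF r(3)] by blast
    moreover have "sorted_wrt (<) (r[c := x])"
      using sorted_wrt_less_list_update r(2) c by auto
    ultimately show ?thesis using ins Some c r(1) by simp
  qed
qed simp

lemma rs_tableau_snoc: "rs_tableau (v @ [x]) = tab_insert x (rs_tableau v)"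
  by (simp add: rs_tableau_def)

lemma rs_tableau_correct:
  "distinct v \<Longrightarrow> tableau (rs_tableau v) \<and> equivclp knuth_step (reading_word (rs_tableau v)) v"
proof (induction v rule: rev_induct)
  case (snoc x v)
  let ?T = "rs_tableau v"
  have IH: "tableau ?T" "equivclp knuth_step (reading_word ?T) v"
    using snoc by auto
  have "distinct (reading_word ?T @ [x])"
    using knuth_equiv_distinct[OF knuth_equiv_append[OF IH(2), of "[]" "[x]"]] snoc.prems by simp
  then have "tableau (tab_insert x ?T)"
    and "equivclp knuth_step (reading_word (tab_insert x ?T)) (reading_word ?T @ [x])"
    using tableau_tab_insert knuth_equiv_tab_insert IH(1) by blast+
  moreover have "equivclp knuth_step (reading_word ?T @ [x]) (v @ [x])"
    using knuth_equiv_append[OF IH(2), of "[]" "[x]"] by simp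
  ultimately show ?case using rs_tableau_snoc equivclp_trans by metis
qed (simp add: rs_tableau_def)

section \<open>Greene's theorem\<close>

text \<open>The position of cell (r, c) in the reading word, which lists the rows bottom up.\<close>
fun cell_pos :: "nat list list \<Rightarrow> nat \<Rightarrow> nat \<Rightarrow> nat" where
  "cell_pos [] r c = c"
| "cell_pos (x # xs) 0 c = length (reading_word xs) + c"
| "cell_pos (x # xs) (Suc r) c = cell_pos xs r c"

definition cells :: "nat list list \<Rightarrow> (nat \<times> nat) set" where
  "cells T = {(r, c). r < length T \<and> c < length (T ! r)}"

lemma cell_pos_row_start: "r < length T \<Longrightarrow> cell_pos T r c = cell_pos T r 0 + c"
  by (induction T r c rule: cell_pos.induct) auto

lemma reading_word_cell_pos:
  "r < length T \<Longrightarrow> c < length (T ! r) \<Longrightarrow>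
    cell_pos T r c < length (reading_word T) \<and> reading_word T ! cell_pos T r c = T ! r ! c"
  by (induction T r c rule: cell_pos.induct) (auto simp: nth_append)

lemma cell_pos_surj:
  "p < length (reading_word T) \<Longrightarrow> \<exists>r c. r < length T \<and> c < length (T ! r) \<and> p = cell_pos T r c"
proof (induction T arbitrary: p)
  case (Cons x xs)
  show ?case
  proof (cases "p < length (reading_word xs)")
    case True
    then obtain r c where "r < length xs" "c < length (xs ! r)" "p = cell_pos xs r c"
      using Cons.IH by blast
    then show ?thesis by (intro exI[of _ "Suc r"] exI[of _ c]) auto
  next
    case False
    then show ?thesis
      using Cons.prems by (intro exI[of _ 0] exI[of _ "p - length (reading_word xs)"]) auto
  qed
qed simp

lemma cell_pos_lower_row_first:
  "r < r' \<Longrightarrow> r' < length T \<Longrightarrow> c < length (T ! r) \<Longrightarrow> c' < length (T ! r') \<Longrightarrow>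
    cell_pos T r' c' < cell_pos T r c"
proof (induction T arbitrary: r r')
  case (Cons x xs)
  obtain r1 where r1: "r' = Suc r1" using Cons.prems by (cases r') auto
  show ?case
  proof (cases r)
    case 0
    then show ?thesis using reading_word_cell_pos[of r1 xs c'] Cons.prems r1 by simp
  next
    case (Suc r0)
    then show ?thesis using Cons.IH[of r0 r1] Cons.prems r1 by simp
  qed
qed simp

lemma inj_on_cell_pos: "inj_on (\<lambda>(r, c). cell_pos T r c) (cells T)"
proof (rule inj_onI, clarify)
  fix r c r' c' assume a: "(r, c) \<in> cells T" "(r', c') \<in> cells T" "cell_pos T r c = cell_pos T r' c'"
  have "r = r'"
  proof (rule ccontr)
    assume "r \<noteq> r'"
    then consider "r < r'" | "r' < r" by linarith
    then show False using cell_pos_lower_row_first a unfolding cells_def by cases fastforce+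
  qed
  then show "r = r' \<and> c = c'"
    using a cell_pos_row_start[of r T] unfolding cells_def by (metis (no_types) add_left_cancel case_prodD mem_Collect_eq)
qed

lemma tableau_row_sorted: "tableau T \<Longrightarrow> r < length T \<Longrightarrow> sorted_wrt (<) (T ! r)"
  by (induction T arbitrary: r) (auto simp: nth_Cons split: nat.splits)

lemma tableau_column_less:
  "tableau T \<Longrightarrow> r < r' \<Longrightarrow> r' < length T \<Longrightarrow> c < length (T ! r') \<Longrightarrow>
    c < length (T ! r) \<and> T ! r ! c < T ! r' ! c"
proof (induction T arbitrary: r r')
  case (Cons a rs)
  obtain r1 where r1: "r' = Suc r1" using Cons.prems by (cases r') auto
  then obtain s ss where rs: "rs = s # ss" using Cons.prems by (cases rs) auto
  have dom: "length s \<le> length a" "\<forall>d<length s. a ! d < s ! d"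
    using Cons.prems(1) rs by (auto simp: dominates_def)
  show ?case
  proof (cases r)
    case 0
    show ?thesis
    proof (cases r1)
      case 0
      then show ?thesis using dom r1 rs Cons.prems \<open>r = 0\<close> by auto
    next
      case (Suc r2)
      have "c < length (rs ! 0) \<and> rs ! 0 ! c < rs ! r1 ! c"
        using Cons.IH[of 0 r1] Cons.prems r1 Suc by simp
      then show ?thesis using dom rs r1 \<open>r = 0\<close> by auto
    qed
  next
    case (Suc r0)
    then show ?thesis using Cons.IH[of r0 r1] Cons.prems r1 by simp
  qed
qed simp

lemma tableau_row_length_antimono:
  "tableau T \<Longrightarrow> r \<le> r' \<Longrightarrow> r' < length T \<Longrightarrow> length (T ! r') \<le> length (T ! r)"
  using tableau_column_less[of T r r'] by (cases "r = r'") (auto simp: not_le[symmetric])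

lemma length_reading_word: "length (reading_word T) = (\<Sum>r<length T. length (T ! r))"
proof (induction T)
  case (Cons a T)
  then show ?case unfolding length_Cons sum.lessThan_Suc_shift by simp
qed simp

lemma tableau_height_le: "tableau T \<Longrightarrow> length T \<le> length (reading_word T)"
proof (induction T)
  case (Cons a T)
  then show ?case by (cases a) auto
qed simp

lemma card_cells_first_rows:
  "card {(r, c). r < t \<and> r < length T \<and> c < length (T ! r)} = (\<Sum>r<min t (length T). length (T ! r))"
proof -
  have "{(r, c). r < t \<and> r < length T \<and> c < length (T ! r)} = (SIGMA r:{..<min t (length T)}. {..<length (T ! r)})"
    by auto
  then show ?thesis by (simp add: card_SigmaI)
qed

lemma down_closed_eq_lessThan:
  fixes X :: "nat set"
  assumes "finite X" "\<And>a b. b \<in> X \<Longrightarrow> a \<le> b \<Longrightarrow> a \<in> X"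
  shows "X = {..<card X}"
proof (cases "X = {}")
  case False
  then have "Max X \<in> X" using assms(1) by simp
  then have "X = {..Max X}" using assms by (auto intro: Max_ge)
  then show ?thesis by (metis card_atMost lessThan_Suc_atMost)
qed simp

lemma card_eq_sum_columns:
  fixes X :: "('a \<times> nat) set"
  assumes "finite X" "\<And>r c. (r, c) \<in> X \<Longrightarrow> c < W"
  shows "card X = (\<Sum>c<W. card {r. (r, c) \<in> X})"
proof -
  let ?swap = "\<lambda>(c, r). (r, c)" and ?Cols = "SIGMA c:{..<W}. {r. (r, c) \<in> X}"
  have "X = ?swap ` ?Cols"
    using assms(2) by auto
  moreover have "inj_on ?swap ?Cols"
    by (auto simp: inj_on_def)
  ultimately have "card X = card ?Cols"
    by (metis card_image)
  also have "\<dots> = (\<Sum>c<W. card {r. (r, c) \<in> X})"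
  proof (rule card_SigmaI)
    have "finite {r. (r, c) \<in> X}" for c
      by (rule finite_subset[OF _ finite_imageI[OF assms(1), of fst]]) force
    then show "\<forall>c\<in>{..<W}. finite {r. (r, c) \<in> X}" by blast
  qed simp
  finally show ?thesis .
qed

lemma tableau_column_labels_distinct:
  assumes T: "tableau T" and lab: "incr_labelling (reading_word T) A S f"
    and cells: "(r, c) \<in> cells T" "(r', c) \<in> cells T"
    and in_S: "cell_pos T r c \<in> S" "cell_pos T r' c \<in> S" and "r < r'"
  shows "f (cell_pos T r c) \<noteq> f (cell_pos T r' c)"
proof
  assume "f (cell_pos T r c) = f (cell_pos T r' c)"
  moreover have "cell_pos T r' c < cell_pos T r c"
    using cell_pos_lower_row_first \<open>r < r'\<close> cells unfolding cells_def by blast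
  ultimately have "reading_word T ! cell_pos T r' c < reading_word T ! cell_pos T r c"
    using incr_labellingD[OF lab in_S(2,1)] by simp
  then have "T ! r' ! c < T ! r ! c"
    using reading_word_cell_pos cells unfolding cells_def by auto
  then show False
    using tableau_column_less[OF T \<open>r < r'\<close>] cells unfolding cells_def by fastforce
qed

lemma tableau_column_count_le:
  assumes T: "tableau T" and lab: "incr_labelling (reading_word T) A S f" and "finite A"
  shows "card {r. (r, c) \<in> cells T \<and> cell_pos T r c \<in> S}
    \<le> card {r. r < card A \<and> r < length T \<and> c < length (T ! r)}"
proof -
  define Col where "Col = {r. (r, c) \<in> cells T \<and> cell_pos T r c \<in> S}"
  define H where "H = {r. r < length T \<and> c < length (T ! r)}"
  have "finite H" unfolding H_def by simp
  moreover have "a \<in> H" if "b \<in> H" "a \<le> b" for a b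
    using that tableau_row_length_antimono[OF T, of a b] unfolding H_def by auto
  ultimately have "H = {..<card H}" by (rule down_closed_eq_lessThan)
  then obtain h where H: "H = {..<h}" by blast
  have "inj_on (\<lambda>r. f (cell_pos T r c)) Col"
  proof (rule inj_onI)
    fix r r' assume "r \<in> Col" "r' \<in> Col" "f (cell_pos T r c) = f (cell_pos T r' c)"
    then show "r = r'"
      using tableau_column_labels_distinct[OF T lab, of r c r'] tableau_column_labels_distinct[OF T lab, of r' c r]
      unfolding Col_def by (cases r r' rule: linorder_cases) auto
  qed
  moreover have "(\<lambda>r. f (cell_pos T r c)) ` Col \<subseteq> A"
    using lab unfolding incr_labelling_def Col_def by auto
  ultimately have "card Col \<le> card A" by (rule card_inj_on_le[OF _ _ \<open>finite A\<close>])
  moreover have "Col \<subseteq> H" unfolding Col_def H_def cells_def by auto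
  then have "card Col \<le> h" using card_mono[of H Col] H by simp
  moreover have "{r. r < card A \<and> r < length T \<and> c < length (T ! r)} = {..<card A} \<inter> H"
    unfolding H_def by auto
  moreover have "{..<card A} \<inter> H = {..<min (card A) h}"
    unfolding H by auto
  ultimately show ?thesis unfolding Col_def[symmetric] by simp
qed

lemma tableau_labelling_card_le:
  assumes T: "tableau T" and lab: "incr_labelling (reading_word T) A S f" and "finite A"
  shows "card S \<le> (\<Sum>r<min (card A) (length T). length (T ! r))"
proof -
  let ?W = "length (reading_word T)" and ?pos = "\<lambda>(r, c). cell_pos T r c"
  define Sc where "Sc = {(r, c). (r, c) \<in> cells T \<and> cell_pos T r c \<in> S}"
  define Top where "Top = {(r, c). r < card A \<and> r < length T \<and> c < length (T ! r)}"
  have column_bound: "c < ?W" if "(r, c) \<in> cells T" for r c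
  proof -
    have "length (T ! r) \<le> (\<Sum>r<length T. length (T ! r))"
      by (rule member_le_sum) (use that in \<open>auto simp: cells_def\<close>)
    moreover have "c < length (T ! r)" using that by (simp add: cells_def)
    ultimately show ?thesis unfolding length_reading_word by linarith
  qed
  have fin_cells: "finite (cells T)"
    by (rule finite_subset[of _ "{..<length T} \<times> {..<?W}"]) (use column_bound in \<open>auto simp: cells_def\<close>)
  have Sc: "Sc \<subseteq> cells T" and Top: "Top \<subseteq> cells T"
    unfolding Sc_def Top_def cells_def by auto
  then have fin: "finite Sc" "finite Top" using fin_cells finite_subset by blast+
  have "S \<subseteq> ?pos ` Sc"
  proof
    fix p assume "p \<in> S"
    moreover from this have "p < ?W" using lab unfolding incr_labelling_def by auto
    ultimately show "p \<in> ?pos ` Sc"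
      using cell_pos_surj unfolding Sc_def cells_def by fastforce
  qed
  moreover have "?pos ` Sc \<subseteq> S" unfolding Sc_def by auto
  ultimately have "S = ?pos ` Sc" by (rule subset_antisym)
  then have "card S = card Sc"
    using card_image[OF inj_on_subset[OF inj_on_cell_pos Sc]] by simp
  also have "\<dots> = (\<Sum>c<?W. card {r. (r, c) \<in> Sc})"
    using Sc column_bound by (intro card_eq_sum_columns[OF fin(1)]) auto
  also have "\<dots> \<le> (\<Sum>c<?W. card {r. (r, c) \<in> Top})"
    using tableau_column_count_le[OF T lab \<open>finite A\<close>] by (intro sum_mono) (simp add: Sc_def Top_def)
  also have "\<dots> = card Top"
    using Top column_bound by (intro card_eq_sum_columns[OF fin(2), symmetric]) auto
  also have "\<dots> = (\<Sum>r<min (card A) (length T). length (T ! r))"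
    unfolding Top_def by (rule card_cells_first_rows)
  finally show ?thesis .
qed

lemma tableau_labelling_exists:
  assumes T: "tableau T"
  shows "\<exists>S f. incr_labelling (reading_word T) {..<t} S f
    \<and> card S = (\<Sum>r<min t (length T). length (T ! r))"
proof -
  let ?pos = "\<lambda>(r, c). cell_pos T r c"
  define C where "C = {(r, c). r < t \<and> r < length T \<and> c < length (T ! r)}"
  define row where "row p = fst (inv_into (cells T) ?pos p)" for p
  have C: "C \<subseteq> cells T" unfolding C_def cells_def by auto
  have row: "row (cell_pos T r c) = r" if "(r, c) \<in> cells T" for r c
    using inv_into_f_f[OF inj_on_cell_pos that] unfolding row_def by simp
  have "incr_labelling (reading_word T) {..<t} (?pos ` C) row"
    unfolding incr_labelling_def
  proof (intro conjI ballI impI)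
    show "?pos ` C \<subseteq> {..<length (reading_word T)}"
      using reading_word_cell_pos unfolding C_def by auto
    show "row ` ?pos ` C \<subseteq> {..<t}"
      using row C unfolding C_def cells_def by auto
  next
    fix p q assume "p \<in> ?pos ` C" "q \<in> ?pos ` C" and pq: "p < q \<and> row p = row q"
    then obtain r c r' c' where rc: "(r, c) \<in> C" "(r', c') \<in> C" "p = cell_pos T r c" "q = cell_pos T r' c'"
      by auto
    have "(r, c) \<in> cells T" "(r', c') \<in> cells T" using rc C by auto
    then have "r = r'" using row rc pq by metis
    then have rl: "r < length T" "c < length (T ! r)" "c' < length (T ! r)"
      using rc unfolding C_def by auto
    then have "c < c'"
      using pq rc \<open>r = r'\<close> cell_pos_row_start[OF rl(1)] by (metis add_less_cancel_left)
    then have "T ! r ! c < T ! r ! c'"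
      using tableau_row_sorted[OF T rl(1)] rl unfolding sorted_wrt_iff_nth_less by auto
    then show "reading_word T ! p < reading_word T ! q"
      using reading_word_cell_pos rl rc \<open>r = r'\<close> by auto
  qed
  moreover have "card (?pos ` C) = card C"
    by (rule card_image[OF inj_on_subset[OF inj_on_cell_pos C]])
  moreover have "card C = (\<Sum>r<min t (length T). length (T ! r))"
    unfolding C_def by (rule card_cells_first_rows)
  ultimately show ?thesis by metis
qed

lemma sum_part: "(\<Sum>j=1..t. part sh j) = (\<Sum>r<min t (length sh). sh ! r)"
proof (induction t)
  case (Suc t)
  then show ?case
    by (cases "t < length sh") (simp_all add: part_def min_def lessThan_Suc)
qed simp

lemma sum_part_rs_shape:
  "(\<Sum>j=1..t. part (rs_shape v) j) = (\<Sum>r<min t (length (rs_tableau v)). length (rs_tableau v ! r))"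
  unfolding rs_shape_def sum_part by simp

lemma greene_card_le:
  assumes "distinct v" "incr_labelling v A S f" "finite A"
  shows "card S \<le> (\<Sum>j=1..card A. part (rs_shape v) j)"
proof -
  let ?T = "rs_tableau v"
  have T: "tableau ?T" "equivclp knuth_step (reading_word ?T) v"
    using rs_tableau_correct[OF assms(1)] by auto
  have "greene_le v (reading_word ?T)"
    using knuth_equiv_greene_le[OF equivclp_sym[OF T(2)]] .
  then obtain S' f' where "incr_labelling (reading_word ?T) A S' f'" "card S' = card S"
    using assms(2) unfolding greene_le_def by blast
  then show ?thesis
    using tableau_labelling_card_le[OF T(1) _ assms(3)] unfolding sum_part_rs_shape by metis
qed

lemma greene_labelling_exists:
  assumes "distinct v"
  shows "\<exists>S f. incr_labelling v {..<t} S f \<and> card S = (\<Sum>j=1..t. part (rs_shape v) j)"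
proof -
  let ?T = "rs_tableau v"
  have T: "tableau ?T" "greene_le (reading_word ?T) v"
    using rs_tableau_correct[OF assms] knuth_equiv_greene_le by auto
  obtain S f where "incr_labelling (reading_word ?T) {..<t} S f"
      "card S = (\<Sum>r<min t (length ?T). length (?T ! r))"
    using tableau_labelling_exists[OF T(1)] by blast
  then show ?thesis
    using T(2) unfolding greene_le_def sum_part_rs_shape by metis
qed

lemma rs_shape_antimono:
  assumes "distinct v" "1 \<le> j"
  shows "part (rs_shape v) (Suc j) \<le> part (rs_shape v) j"
  using tableau_row_length_antimono[of "rs_tableau v" "j - 1" j] rs_tableau_correct[OF assms(1)] assms(2)
  by (auto simp: part_def rs_shape_def)

lemma sum_part_rs_shape_total:
  assumes "distinct v" "length v \<le> N"
  shows "(\<Sum>j=1..N. part (rs_shape v) j) = length v"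
proof -
  let ?T = "rs_tableau v"
  have "tableau ?T" "length (reading_word ?T) = length v"
    using rs_tableau_correct[OF assms(1)] knuth_equiv_set_length by blast+
  moreover from this have "min N (length ?T) = length ?T"
    using tableau_height_le assms(2) by fastforce
  ultimately show ?thesis
    unfolding sum_part_rs_shape by (simp add: length_reading_word)
qed

lemma sorted_wrt_less_nth_less_iff:
  fixes ps :: "nat list"
  assumes "sorted_wrt (<) ps" "j < length ps" "j' < length ps"
  shows "ps ! j < ps ! j' \<longleftrightarrow> j < j'"
  using assms unfolding sorted_wrt_iff_nth_less by (metis less_asym' linorder_neqE_nat)

lemma incr_labelling_to_subseq:
  assumes ps: "sorted_wrt (<) ps" and lab: "incr_labelling w A S f" and "S \<subseteq> set ps"
  shows "\<exists>S0 f0. incr_labelling (map (nth w) ps) A S0 f0 \<and> card S0 = card S"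
proof -
  define S0 where "S0 = {j. j < length ps \<and> ps ! j \<in> S}"
  have "S = nth ps ` S0"
    using \<open>S \<subseteq> set ps\<close> unfolding S0_def by (fastforce simp: in_set_conv_nth)
  moreover have "inj_on (nth ps) S0"
    using ps by (intro inj_on_nth) (auto simp: S0_def strict_sorted_iff)
  ultimately have "card S0 = card S" by (simp add: card_image)
  moreover have "incr_labelling (map (nth w) ps) A S0 (\<lambda>j. f (ps ! j))"
    using lab sorted_wrt_less_nth_less_iff[OF ps] unfolding incr_labelling_def S0_def by auto
  ultimately show ?thesis by blast
qed

lemma incr_labelling_from_subseq:
  assumes ps: "sorted_wrt (<) ps" "set ps \<subseteq> {..<length w}"
    and lab: "incr_labelling (map (nth w) ps) A S0 f0"
  shows "\<exists>S f. incr_labelling w A S f \<and> S \<subseteq> set ps \<and> card S = card S0"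
proof -
  have S0: "S0 \<subseteq> {..<length ps}" using lab unfolding incr_labelling_def by simp
  have inj: "inj_on (nth ps) {..<length ps}"
    using ps(1) by (intro inj_on_nth) (auto simp: strict_sorted_iff)
  define f where "f p = f0 (inv_into {..<length ps} (nth ps) p)" for p
  have f: "f (ps ! j) = f0 j" if "j < length ps" for j
    unfolding f_def using inv_into_f_f[OF inj] that by simp
  have "incr_labelling w A (nth ps ` S0) f"
    unfolding incr_labelling_def
  proof (intro conjI ballI impI)
    have "nth ps ` S0 \<subseteq> set ps" using S0 by auto
    then show "nth ps ` S0 \<subseteq> {..<length w}" using ps(2) by blast
    show "f ` nth ps ` S0 \<subseteq> A"
      using lab S0 f unfolding incr_labelling_def by auto
  next
    fix p q assume "p \<in> nth ps ` S0" "q \<in> nth ps ` S0" and pq: "p < q \<and> f p = f q"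
    then obtain j j' where jj: "j \<in> S0" "j' \<in> S0" "p = ps ! j" "q = ps ! j'" by auto
    moreover from this have "j < length ps" "j' < length ps" using S0 by auto
    ultimately have "j < j'" "f0 j = f0 j'"
      using pq f sorted_wrt_less_nth_less_iff[OF ps(1)] by auto
    then show "w ! p < w ! q"
      using incr_labellingD[OF lab jj(1,2)] jj S0 by auto
  qed
  moreover have "nth ps ` S0 \<subseteq> set ps" using S0 by auto
  moreover have "card (nth ps ` S0) = card S0"
    using card_image inj_on_subset[OF inj S0] by blast
  ultimately show ?thesis by blast
qed

lemma list_comprehension_filter: "[f p. p \<leftarrow> xs, P p] = map f (filter P xs)"
  by (induction xs) auto

lemma color_word_eq: "color_word w c i = map (nth w) (filter (\<lambda>p. c ! p = i) [0..<length w])"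
  unfolding color_word_def by (rule list_comprehension_filter)

lemma distinct_color_word: "distinct w \<Longrightarrow> distinct (color_word w c i)"
  unfolding color_word_eq by (auto simp: distinct_map intro: inj_on_nth)

lemma color_greene_card_le:
  assumes "distinct w" "incr_labelling w A S f" "S \<subseteq> {p. c ! p = i}" "finite A"
  shows "card S \<le> (\<Sum>j=1..card A. part (rs_shape (color_word w c i)) j)"
proof -
  let ?ps = "filter (\<lambda>p. c ! p = i) [0..<length w]"
  have "sorted_wrt (<) ?ps" by (rule sorted_wrt_filter) simp
  moreover have "S \<subseteq> set ?ps" using assms(2,3) unfolding incr_labelling_def by auto
  ultimately obtain S0 f0 where "incr_labelling (color_word w c i) A S0 f0" "card S0 = card S"
    using incr_labelling_to_subseq[OF _ assms(2)] unfolding color_word_eq by blast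
  then show ?thesis
    using greene_card_le[OF distinct_color_word[OF assms(1)] _ assms(4)] by metis
qed

lemma color_greene_labelling_exists:
  assumes "distinct w"
  shows "\<exists>S f. incr_labelling w {..<t} S f \<and> S \<subseteq> {p. c ! p = i}
    \<and> card S = (\<Sum>j=1..t. part (rs_shape (color_word w c i)) j)"
proof -
  let ?ps = "filter (\<lambda>p. c ! p = i) [0..<length w]"
  obtain S0 f0 where "incr_labelling (map (nth w) ?ps) {..<t} S0 f0"
      "card S0 = (\<Sum>j=1..t. part (rs_shape (color_word w c i)) j)"
    using greene_labelling_exists[OF distinct_color_word[OF assms]] unfolding color_word_eq by blast
  moreover have "sorted_wrt (<) ?ps" by (rule sorted_wrt_filter) simp
  moreover have "set ?ps \<subseteq> {..<length w}" by auto
  ultimately obtain S f where "incr_labelling w {..<t} S f" "S \<subseteq> set ?ps"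
      "card S = (\<Sum>j=1..t. part (rs_shape (color_word w c i)) j)"
    using incr_labelling_from_subseq by metis
  then show ?thesis by auto
qed

section \<open>Colored permutations\<close>

definition color_union :: "(nat \<times> nat set) list \<Rightarrow> nat \<Rightarrow> nat set" where
  "color_union L i = \<Union> (snd ` {x \<in> set L. fst x = i})"

lemma sum_num_color: "\<forall>x\<in>set L. fst x < m \<Longrightarrow> (\<Sum>i<m. num_color L i) = length L"
proof (induction L)
  case (Cons x L)
  have "(\<Sum>i<m. num_color (x # L) i) = (\<Sum>i<m. (if fst x = i then 1 else 0) + num_color L i)"
    by (rule sum.cong) (auto simp: num_color_def)
  also have "\<dots> = 1 + (\<Sum>i<m. num_color L i)"
    using Cons.prems by (simp add: sum.distrib)
  finally show ?case using Cons by simp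
qed (simp add: num_color_def)

lemma choices_fst_less: "L \<in> choices m w c k \<Longrightarrow> x \<in> set L \<Longrightarrow> fst x < m"
  unfolding choices_def by (auto simp: in_set_conv_nth)

lemma color_union_subset:
  "L \<in> choices m w c k \<Longrightarrow> color_union L i \<subseteq> {p. p < length w \<and> c ! p = i}"
  unfolding choices_def color_union_def mono_incr_def by (fastforce simp: in_set_conv_nth)

lemma card_Union_choice:
  assumes "L \<in> choices m w c k"
  shows "card (\<Union> (snd ` set L)) = (\<Sum>i<m. card (color_union L i))"
proof -
  have "\<Union> (snd ` set L) = (\<Union>i<m. color_union L i)"
    using choices_fst_less[OF assms] unfolding color_union_def by fastforce
  moreover have "finite (color_union L i)" for i
    using color_union_subset[OF assms, of i] finite_subset by (metis (no_types, lifting) finite_nat_set_iff_bounded mem_Collect_eq subset_eq)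
  moreover have "color_union L i \<inter> color_union L j = {}" if "i \<noteq> j" for i j
    using color_union_subset[OF assms, of i] color_union_subset[OF assms, of j] that by blast
  ultimately show ?thesis by (simp add: card_UN_disjoint)
qed

text \<open>The labels are list indices rather than the sequences themselves, since a choice may
  repeat an empty sequence.\<close>
lemma color_union_labelling:
  assumes L: "L \<in> choices m w c k"
  shows "\<exists>f. incr_labelling w {a. a < k \<and> fst (L ! a) = i} (color_union L i) f"
proof -
  have len: "length L = k" and incr: "\<And>a. a < k \<Longrightarrow> mono_incr w c (fst (L ! a)) (snd (L ! a))"
    and disj: "\<And>a b. a < k \<Longrightarrow> b < k \<Longrightarrow> a \<noteq> b \<Longrightarrow> snd (L ! a) \<inter> snd (L ! b) = {}"
    using L unfolding choices_def by auto
  define f where "f p = (SOME a. a < k \<and> p \<in> snd (L ! a))" for p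
  have f: "f p = a" if "a < k" "p \<in> snd (L ! a)" for p a
  proof -
    have "f p < k \<and> p \<in> snd (L ! f p)"
      unfolding f_def by (rule someI[of _ a]) (use that in simp)
    then show ?thesis using disj that by blast
  qed
  have mem: "p \<in> color_union L i \<longleftrightarrow> (\<exists>a<k. fst (L ! a) = i \<and> p \<in> snd (L ! a))" for p
    unfolding color_union_def using len by (auto simp: in_set_conv_nth) (metis prod.collapse)
  have "incr_labelling w {a. a < k \<and> fst (L ! a) = i} (color_union L i) f"
    unfolding incr_labelling_def
  proof (intro conjI ballI impI)
    show "color_union L i \<subseteq> {..<length w}"
      using color_union_subset[OF L] by auto
    show "f ` color_union L i \<subseteq> {a. a < k \<and> fst (L ! a) = i}"
      using mem f by auto
  next
    fix p q assume "p \<in> color_union L i" "q \<in> color_union L i" "p < q \<and> f p = f q"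
    then obtain a b where "a < k" "p \<in> snd (L ! a)" "b < k" "q \<in> snd (L ! b)" "a = b" "p < q"
      using mem f by metis
    then show "w ! p < w ! q" using incr unfolding mono_incr_def by blast
  qed
  then show ?thesis by blast
qed

lemma card_color_labels: "length L = k \<Longrightarrow> card {a. a < k \<and> fst (L ! a) = i} = num_color L i"
  unfolding num_color_def length_filter_conv_card by simp

definition color_label_pairs :: "nat \<Rightarrow> (nat \<Rightarrow> nat) \<Rightarrow> (nat \<times> nat) list" where
  "color_label_pairs m K = concat (map (\<lambda>i. map (Pair i) [0..<K i]) [0..<m])"

definition labelled_choice ::
    "nat \<Rightarrow> (nat \<Rightarrow> nat) \<Rightarrow> (nat \<Rightarrow> nat set) \<Rightarrow> (nat \<Rightarrow> nat \<Rightarrow> nat) \<Rightarrow> (nat \<times> nat set) list" where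
  "labelled_choice m K S f = map (\<lambda>(i, l). (i, {p \<in> S i. f i p = l})) (color_label_pairs m K)"

lemma set_color_label_pairs: "set (color_label_pairs m K) = (SIGMA i:{..<m}. {..<K i})"
  unfolding color_label_pairs_def by auto

lemma length_color_label_pairs: "length (color_label_pairs m K) = (\<Sum>i<m. K i)"
  unfolding color_label_pairs_def by (simp add: length_concat comp_def sum_list_sum_nth atLeast0LessThan)

lemma distinct_color_label_pairs: "distinct (color_label_pairs m K)"
  by (rule card_distinct) (simp add: set_color_label_pairs length_color_label_pairs)

lemma labelled_choice_nth:
  assumes "a < (\<Sum>i<m. K i)"
  obtains i l where "color_label_pairs m K ! a = (i, l)" "i < m" "l < K i"
    and "labelled_choice m K S f ! a = (i, {p \<in> S i. f i p = l})"
proof -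
  let ?Q = "color_label_pairs m K"
  obtain i l where "?Q ! a = (i, l)" by fastforce
  moreover have "?Q ! a \<in> set ?Q"
    using assms length_color_label_pairs by simp
  ultimately show ?thesis
    using that assms length_color_label_pairs unfolding set_color_label_pairs labelled_choice_def
    by simp
qed

lemma labelled_choice_in_choices:
  assumes lab: "\<And>i. i < m \<Longrightarrow> incr_labelling w {..<K i} (S i) (f i)"
    and col: "\<And>i. i < m \<Longrightarrow> S i \<subseteq> {p. c ! p = i}"
  shows "labelled_choice m K S f \<in> choices m w c (\<Sum>i<m. K i)"
  unfolding choices_def
proof (intro CollectI conjI allI impI)
  show "length (labelled_choice m K S f) = (\<Sum>i<m. K i)"
    unfolding labelled_choice_def by (simp add: length_color_label_pairs)
next
  fix a assume "a < (\<Sum>i<m. K i)"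
  then obtain i l where "i < m" and a: "labelled_choice m K S f ! a = (i, {p \<in> S i. f i p = l})"
    using labelled_choice_nth by blast
  then show "fst (labelled_choice m K S f ! a) < m" by simp
  have "S i \<subseteq> {..<length w}" "S i \<subseteq> {p. c ! p = i}"
    "\<forall>p\<in>S i. \<forall>q\<in>S i. p < q \<and> f i p = f i q \<longrightarrow> w ! p < w ! q"
    using lab[OF \<open>i < m\<close>] col[OF \<open>i < m\<close>] unfolding incr_labelling_def by auto
  then show "mono_incr w c (fst (labelled_choice m K S f ! a)) (snd (labelled_choice m K S f ! a))"
    unfolding a fst_conv snd_conv mono_incr_def by blast
next
  fix a b assume ab: "a < (\<Sum>i<m. K i)" "b < (\<Sum>i<m. K i)" "a \<noteq> b"
  obtain i l where Qa: "color_label_pairs m K ! a = (i, l)" and "i < m" "l < K i"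
    and La: "labelled_choice m K S f ! a = (i, {p \<in> S i. f i p = l})"
    by (rule labelled_choice_nth[OF ab(1)])
  obtain i' l' where Qb: "color_label_pairs m K ! b = (i', l')" and "i' < m" "l' < K i'"
    and Lb: "labelled_choice m K S f ! b = (i', {p \<in> S i'. f i' p = l'})"
    by (rule labelled_choice_nth[OF ab(2)])
  have "(i, l) \<noteq> (i', l')"
    using nth_eq_iff_index_eq[OF distinct_color_label_pairs] ab Qa Qb length_color_label_pairs by metis
  moreover have "S i \<inter> S i' = {}" if "i \<noteq> i'"
    using col[OF \<open>i < m\<close>] col[OF \<open>i' < m\<close>] that by fastforce
  ultimately show "snd (labelled_choice m K S f ! a) \<inter> snd (labelled_choice m K S f ! b) = {}"
    unfolding La Lb by auto
qed

lemma num_color_labelled_choice: "i < m \<Longrightarrow> num_color (labelled_choice m K S f) i = K i"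
proof -
  assume "i < m"
  let ?Q = "color_label_pairs m K"
  have "num_color (labelled_choice m K S f) i = length (filter (\<lambda>q. fst q = i) ?Q)"
    unfolding num_color_def labelled_choice_def filter_map length_map comp_def
    by (metis (no_types, lifting) case_prod_beta fst_conv)
  also have "\<dots> = card ({q. fst q = i} \<inter> set ?Q)"
    using distinct_length_filter[OF distinct_color_label_pairs] by simp
  also have "{q. fst q = i} \<inter> set ?Q = {i} \<times> {..<K i}"
    unfolding set_color_label_pairs using \<open>i < m\<close> by auto
  finally show ?thesis by simp
qed

lemma color_union_labelled_choice:
  assumes "i < m" "f i ` S i \<subseteq> {..<K i}"
  shows "color_union (labelled_choice m K S f) i = S i"
proof -
  have "color_union (labelled_choice m K S f) i = (\<Union>l<K i. {p \<in> S i. f i p = l})"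
    unfolding color_union_def labelled_choice_def set_map set_color_label_pairs using assms(1) by auto
  also have "\<dots> = S i"
    using assms(2) by auto
  finally show ?thesis .
qed

lemma int_Suc_choose_two: "int ((t + 1) choose 2) = (\<Sum>j=1..t. int j)"
proof (induction t)
  case (Suc t)
  have "(Suc t + 1) choose 2 = (t + 1 choose 2) + (t + 1)"
    by (simp add: numeral_2_eq_2)
  then show ?case using Suc by simp
qed simp

lemma down_closed_eq_atLeastAtMost:
  fixes X :: "nat set"
  assumes "finite X" "0 \<notin> X" "\<And>j j'. j \<in> X \<Longrightarrow> 1 \<le> j' \<Longrightarrow> j' \<le> j \<Longrightarrow> j' \<in> X"
  shows "X = {1..card X}"
proof (cases "X = {}")
  case False
  then have "Max X \<in> X" using assms(1) by simp
  have "X \<subseteq> {1..Max X}"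
  proof
    fix x assume "x \<in> X"
    then have "x \<noteq> 0" "x \<le> Max X" using assms(1,2) by (metis, simp)
    then show "x \<in> {1..Max X}" by simp
  qed
  moreover have "{1..Max X} \<subseteq> X"
    using assms(3)[OF \<open>Max X \<in> X\<close>] by auto
  ultimately have "X = {1..Max X}" by (rule subset_antisym)
  then show ?thesis by (metis card_atLeastAtMost diff_Suc_1)
qed simp

locale colored_permutation =
  fixes m n :: nat and w c :: "nat list"
  assumes m_pos: "m \<ge> 1" and perm: "colored_perm m n w c"
begin

lemma length_w: "length w = n" and distinct_w: "distinct w"
  and color_less: "p < n \<Longrightarrow> c ! p < m"
  using perm unfolding colored_perm_def by auto

definition shape_part :: "nat \<Rightarrow> nat \<Rightarrow> nat" where
  "shape_part i j = part (rs_shape (color_word w c i)) j"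

definition weight :: "nat \<times> nat \<Rightarrow> int" where
  "weight = (\<lambda>(i, j). int m * (int (part (rs_shape (color_word w c i)) j) - int j) + int i)"

definition indices :: "(nat \<times> nat) set" where
  "indices = {(i, j). i < m \<and> j \<ge> 1}"

lemma weight_eq: "weight (i, j) = int m * (int (shape_part i j) - int j) + int i"
  by (simp add: weight_def shape_part_def)

lemma sum_shape_part_le: "(\<Sum>j=1..t. shape_part i j) \<le> n"
proof -
  obtain S f where "incr_labelling w {..<t} S f" "card S = (\<Sum>j=1..t. shape_part i j)"
    using color_greene_labelling_exists[OF distinct_w] unfolding shape_part_def by blast
  moreover from this have "S \<subseteq> {..<n}" using length_w unfolding incr_labelling_def by auto
  ultimately show ?thesis by (metis card_lessThan card_mono finite_lessThan)
qed

lemma shape_part_antimono: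
  assumes "1 \<le> j" "j \<le> j'"
  shows "shape_part i j' \<le> shape_part i j"
  using assms(2)
proof (induction j' rule: dec_induct)
  case (step k)
  then show ?case
    using rs_shape_antimono[OF distinct_color_word[OF distinct_w], of k c i] assms(1)
    unfolding shape_part_def by simp
qed simp

lemma shape_part_le: "shape_part i j \<le> n"
proof (cases "1 \<le> j")
  case True
  then have "shape_part i j \<le> (\<Sum>j'=1..j. shape_part i j')"
    by (intro member_le_sum) auto
  then show ?thesis using sum_shape_part_le[where t=j and i=i] by simp
qed (simp add: shape_part_def part_def)

lemma shape_part_eq_0: "n < j \<Longrightarrow> shape_part i j = 0"
proof (rule ccontr)
  assume "n < j" "shape_part i j \<noteq> 0"
  then have "1 \<le> shape_part i j'" if "j' \<in> {1..j}" for j'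
    using shape_part_antimono[of j' j i] that by fastforce
  then have "j \<le> (\<Sum>j'=1..j. shape_part i j')"
    using sum_mono[of "{1..j}" "\<lambda>_. 1::nat"] by fastforce
  then show False using sum_shape_part_le[where t=j and i=i] \<open>n < j\<close> by simp
qed

lemma length_color_word: "length (color_word w c i) = card {p. p < n \<and> c ! p = i}"
proof -
  have "length (color_word w c i) = length (filter (\<lambda>p. c ! p = i) [0..<n])"
    unfolding color_word_eq length_w by simp
  also have "\<dots> = card {p. p < n \<and> c ! p = i}"
    by (subst distinct_length_filter) (auto intro: arg_cong[where f = card])
  finally show ?thesis .
qed

lemma sum_shape_part_total: "(\<Sum>j=1..n. shape_part i j) = length (color_word w c i)"
proof -
  have "length (color_word w c i) \<le> n"
    unfolding length_color_word by (rule card_mono[of "{..<n}", simplified]) auto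
  then show ?thesis
    using sum_part_rs_shape_total[OF distinct_color_word[OF distinct_w]] unfolding shape_part_def by blast
qed

lemma sum_length_color_word: "(\<Sum>i<m. length (color_word w c i)) = n"
proof -
  have "(\<Sum>i<m. card {p. p < n \<and> c ! p = i}) = card (\<Union>i<m. {p. p < n \<and> c ! p = i})"
    by (rule card_UN_disjoint[symmetric]) auto
  also have "(\<Union>i<m. {p. p < n \<and> c ! p = i}) = {..<n}"
    using color_less by auto
  finally show ?thesis unfolding length_color_word by simp
qed

lemma weight_strict_antimono: "1 \<le> j \<Longrightarrow> j < j' \<Longrightarrow> weight (i, j') < weight (i, j)"
  using shape_part_antimono[of j j' i] m_pos unfolding weight_eq
  by (intro add_strict_right_mono mult_strict_left_mono) auto

lemma inj_on_weight: "inj_on weight indices"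
proof (rule inj_onI)
  fix a b assume ab: "a \<in> indices" "b \<in> indices" "weight a = weight b"
  obtain i j i' j' where ij: "a = (i, j)" "b = (i', j')" by (cases a, cases b)
  have "weight a mod int m = int i" "weight b mod int m = int i'"
    using ab(1,2) unfolding ij indices_def weight_eq by simp_all
  then have "i = i'" using ab(3) by simp
  moreover have "j = j'"
    using weight_strict_antimono[of j j' i] weight_strict_antimono[of j' j i] ab \<open>i = i'\<close>
    unfolding ij indices_def by (cases j j' rule: linorder_cases) auto
  ultimately show "a = b" using ij by simp
qed

lemma weight_less: "a \<in> indices \<Longrightarrow> weight a < int (m * n)"
proof -
  assume "a \<in> indices"
  then obtain i j where a: "a = (i, j)" "i < m" "1 \<le> j" unfolding indices_def by auto
  have "int m * (int (shape_part i j) - int j) \<le> int m * (int n - 1)"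
    using shape_part_le[of i j] a m_pos by (intro mult_left_mono) auto
  then show ?thesis unfolding a weight_eq using a(2) by (simp add: algebra_simps)
qed

text \<open>The weight with all shape parts replaced by 0. It takes every negative value exactly
  once, and enum_index lists the indices in decreasing order of it; since the weight exceeds
  it by at most mn, this bounds the number of indices above any level.\<close>
definition base :: "nat \<times> nat \<Rightarrow> int" where
  "base a = int (fst a) - int m * int (snd a)"

definition enum_index :: "nat \<Rightarrow> nat \<times> nat" where
  "enum_index q = (m - 1 - q mod m, q div m + 1)"

lemma enum_index_in_indices: "enum_index q \<in> indices"
  unfolding enum_index_def indices_def using m_pos by auto

lemma base_enum_index: "base (enum_index q) = - (int q + 1)"
proof -
  have "q mod m \<le> m - 1" using m_pos by (metis Suc_pred' le_simps(2) less_le_trans mod_less_divisor zero_less_one)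
  then have "int (m - 1 - q mod m) = int m - 1 - int (q mod m)" using m_pos by simp
  moreover have "int q = int m * int (q div m) + int (q mod m)"
    by (metis of_nat_add of_nat_mult div_mult_mod_eq mult.commute)
  ultimately show ?thesis unfolding enum_index_def base_def by (simp add: algebra_simps)
qed

lemma inj_enum_index: "inj enum_index"
  by (rule injI) (metis base_enum_index add_right_cancel neg_equal_iff_equal of_nat_eq_iff)

lemma enum_index_surj: "a \<in> indices \<Longrightarrow> \<exists>q. a = enum_index q"
proof -
  assume "a \<in> indices"
  then obtain i j where a: "a = (i, j)" "i < m" "1 \<le> j" unfolding indices_def by auto
  define r where "r = m - 1 - i"
  have "r < m" using a m_pos unfolding r_def by simp
  define q where "q = r + m * (j - 1)"
  have "q div m = j - 1" "q mod m = m - 1 - i" using \<open>r < m\<close> unfolding q_def r_def by auto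
  then have "enum_index q = (i, j)" unfolding enum_index_def using a by auto
  then show ?thesis using a by metis
qed

lemma enum_index_lessThan: "enum_index ` {..<K} = {a \<in> indices. - int K \<le> base a}"
proof
  show "enum_index ` {..<K} \<subseteq> {a \<in> indices. - int K \<le> base a}"
    using enum_index_in_indices base_enum_index by auto
  show "{a \<in> indices. - int K \<le> base a} \<subseteq> enum_index ` {..<K}"
  proof
    fix a assume a: "a \<in> {a \<in> indices. - int K \<le> base a}"
    then obtain q where q: "a = enum_index q" using enum_index_surj by blast
    then have "q < K" using a base_enum_index[of q] by simp
    then show "a \<in> enum_index ` {..<K}" using q by simp
  qed
qed

lemma card_enum_index_lessThan: "card (enum_index ` {..<K}) = K"
  using card_image[OF inj_on_subset[OF inj_enum_index subset_UNIV]] by simp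

lemma base_le_weight: "base a \<le> weight a"
  by (cases a) (simp add: weight_eq base_def algebra_simps)

lemma weight_le_base: "weight a \<le> base a + int (m * n)"
proof -
  obtain i j where a: "a = (i, j)" by (cases a)
  have "int m * int (shape_part i j) \<le> int m * int n"
    using shape_part_le[of i j] by (simp add: mult_left_mono)
  then show ?thesis unfolding a by (simp add: weight_eq base_def algebra_simps)
qed

definition upper_set :: "int \<Rightarrow> (nat \<times> nat) set" where
  "upper_set x = {a \<in> indices. x \<le> weight a}"

definition count_ge :: "int \<Rightarrow> nat" where
  "count_ge x = card (upper_set x)"

lemma upper_set_subset_enum: "upper_set x \<subseteq> enum_index ` {..<nat (int (m * n) - x)}"
proof
  fix a assume "a \<in> upper_set x"
  then have a: "a \<in> indices" "x \<le> weight a" unfolding upper_set_def by auto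
  obtain q where q: "a = enum_index q" using enum_index_surj[OF a(1)] by blast
  have "x \<le> - (int q + 1) + int (m * n)" using weight_le_base[of a] base_enum_index[of q] q a(2) by simp
  then show "a \<in> enum_index ` {..<nat (int (m * n) - x)}" using q by simp
qed

lemma finite_upper_set: "finite (upper_set x)"
  using upper_set_subset_enum finite_subset by blast

lemma count_ge_antimono: "x \<le> y \<Longrightarrow> count_ge y \<le> count_ge x"
  unfolding count_ge_def by (rule card_mono[OF finite_upper_set]) (auto simp: upper_set_def)

lemma count_ge_le_Suc: "count_ge x \<le> count_ge (x + 1) + 1"
proof -
  have split: "upper_set x = upper_set (x + 1) \<union> {a \<in> indices. weight a = x}"
    unfolding upper_set_def by auto
  have "card {a \<in> indices. weight a = x} \<le> card {x}"
    by (rule card_inj_on_le[OF inj_on_subset[OF inj_on_weight]]) auto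
  then show ?thesis
    using card_Un_le[of "upper_set (x + 1)" "{a \<in> indices. weight a = x}"]
    unfolding count_ge_def split by simp
qed

lemma count_ge_eq_0: "int (m * n) \<le> x \<Longrightarrow> count_ge x = 0"
proof -
  assume "int (m * n) \<le> x"
  then have "upper_set x = {}" unfolding upper_set_def using weight_less by fastforce
  then show ?thesis by (simp add: count_ge_def)
qed

lemma count_ge_lower: "K \<le> count_ge (- int K)"
proof -
  have "enum_index ` {..<K} \<subseteq> upper_set (- int K)"
    unfolding enum_index_lessThan upper_set_def using base_le_weight order_trans by blast
  then show ?thesis
    unfolding count_ge_def using card_mono[OF finite_upper_set] card_enum_index_lessThan by metis
qed

text \<open>At levels -K \<le> -mn the weight and the base agree on which indices lie above the
  level, since the shape parts vanish for j > n.\<close>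
lemma upper_set_low: "m * n \<le> K \<Longrightarrow> upper_set (- int K) = enum_index ` {..<K}"
proof
  assume K: "m * n \<le> K"
  show "upper_set (- int K) \<subseteq> enum_index ` {..<K}"
  proof
    fix a assume "a \<in> upper_set (- int K)"
    then have a: "a \<in> indices" "- int K \<le> weight a" unfolding upper_set_def by auto
    obtain i j where ij: "a = (i, j)" using a(1) unfolding indices_def by auto
    have "- int K \<le> base a"
    proof (cases "shape_part i j = 0")
      case True
      then show ?thesis using a(2) ij by (simp add: weight_eq base_def)
    next
      case False
      then have "j \<le> n" using shape_part_eq_0 by (meson not_le)
      then have "int m * int j \<le> int (m * n)" by (simp add: mult_left_mono)
      moreover have "int (m * n) \<le> int K" using K by (simp only: of_nat_le_iff)
      ultimately show ?thesis using ij unfolding base_def by simp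
    qed
    then show "a \<in> enum_index ` {..<K}" unfolding enum_index_lessThan using a by simp
  qed
qed (auto simp: enum_index_lessThan upper_set_def dest: order_trans[OF _ base_le_weight])

lemma count_ge_low: "m * n \<le> K \<Longrightarrow> count_ge (- int K) = K"
  unfolding count_ge_def using upper_set_low card_enum_index_lessThan by simp

text \<open>The k-th largest weight; the search range is finite because count_ge jumps from
  at least k at -k to 0 at mn.\<close>
definition kth_weight :: "nat \<Rightarrow> int" where
  "kth_weight k = Max {x. - int k \<le> x \<and> x \<le> int (m * n) \<and> k \<le> count_ge x}"

lemma kth_weight:
  "- int k \<le> kth_weight k \<and> count_ge (kth_weight k) = k \<and> count_ge (kth_weight k + 1) = k - 1"
proof -
  define X where "X = {x. - int k \<le> x \<and> x \<le> int (m * n) \<and> k \<le> count_ge x}"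
  have "finite X" unfolding X_def by (rule finite_subset[of _ "{- int k..int (m * n)}"]) auto
  moreover have "- int k \<in> X"
    unfolding X_def using count_ge_lower[of k] by (simp del: of_nat_mult)
  ultimately have "kth_weight k \<in> X" and max: "\<And>y. y \<in> X \<Longrightarrow> y \<le> kth_weight k"
    unfolding kth_weight_def X_def[symmetric] using Max_in by auto
  then have bounds: "- int k \<le> kth_weight k" "k \<le> count_ge (kth_weight k)" "kth_weight k \<le> int (m * n)"
    unfolding X_def by auto
  show ?thesis
  proof (cases "k = 0")
    case True
    then have "int (m * n) \<le> kth_weight k" using max unfolding X_def by simp
    then show ?thesis using count_ge_eq_0 bounds True by simp
  next
    case False
    have "count_ge (kth_weight k + 1) < k"
    proof (cases "kth_weight k + 1 \<le> int (m * n)")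
      case True
      have "kth_weight k + 1 \<notin> X" using max by fastforce
      then show ?thesis using True bounds unfolding X_def by auto
    next
      case False
      then show ?thesis using count_ge_eq_0[of "kth_weight k + 1"] \<open>k \<noteq> 0\<close> by simp
    qed
    then show ?thesis using count_ge_le_Suc[of "kth_weight k"] bounds by simp
  qed
qed

lemma kth_weight_strict_antimono: "kth_weight (Suc k) < kth_weight k"
proof (rule ccontr)
  assume "\<not> kth_weight (Suc k) < kth_weight k"
  then have "count_ge (kth_weight (Suc k)) \<le> count_ge (kth_weight k)"
    by (intro count_ge_antimono) simp
  then show False using kth_weight[of k] kth_weight[of "Suc k"] by simp
qed

lemma kth_weight_low: "m * n < k \<Longrightarrow> kth_weight k = - int k"
proof (rule ccontr)
  assume k: "m * n < k" and "kth_weight k \<noteq> - int k"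
  then have "- int (k - 1) \<le> kth_weight k" using kth_weight[of k] by simp
  then have "count_ge (kth_weight k) \<le> k - 1"
    using count_ge_antimono count_ge_low[of "k - 1"] k by fastforce
  then show False using kth_weight[of k] k by simp
qed

definition top_set :: "nat \<Rightarrow> (nat \<times> nat) set" where
  "top_set k = upper_set (kth_weight k)"

lemma card_top_set: "card (top_set k) = k"
  using kth_weight unfolding top_set_def count_ge_def by blast

lemma finite_top_set: "finite (top_set k)"
  unfolding top_set_def by (rule finite_upper_set)

lemma top_set_subset: "top_set k \<subseteq> indices"
  unfolding top_set_def upper_set_def by auto

lemma top_set_0: "top_set 0 = {}"
  using card_top_set[of 0] finite_top_set by simp

lemma upper_set_eqI: "count_ge x = count_ge y \<Longrightarrow> upper_set x = upper_set y"
proof -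
  assume "count_ge x = count_ge y"
  moreover have "upper_set y \<subseteq> upper_set x \<or> upper_set x \<subseteq> upper_set y"
    unfolding upper_set_def by (cases "x \<le> y") auto
  ultimately show ?thesis unfolding count_ge_def by (metis finite_upper_set card_subset_eq)
qed

lemma sum_weight_le_top_set:
  assumes D: "D \<subseteq> indices" "finite D" "card D = k"
  shows "sum weight D \<le> sum weight (top_set k)"
proof -
  let ?T = "top_set k" and ?x = "kth_weight k"
  have "card (D - ?T) = card (?T - D)"
    using D(2,3) card_top_set finite_top_set by (metis card_Diff_subset_Int Int_commute finite_Int)
  then have "sum weight (D - ?T) \<le> sum weight (?T - D)"
    using sum_bounded_above[of "D - ?T" weight ?x] sum_bounded_below[of "?T - D" ?x weight] D(1)
    unfolding top_set_def upper_set_def by fastforce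
  moreover have "sum weight D = sum weight (D - ?T) + sum weight (D \<inter> ?T)"
    "sum weight ?T = sum weight (?T - D) + sum weight (D \<inter> ?T)"
    using D(2) finite_top_set by (metis Int_commute add.commute sum.Int_Diff)+
  ultimately show ?thesis by linarith
qed

lemma sum_weight_top_set_Suc:
  "sum weight (top_set (Suc k)) = sum weight (top_set k) + kth_weight (Suc k)"
proof -
  let ?x = "kth_weight (Suc k)"
  have top_k: "upper_set (?x + 1) = top_set k"
    unfolding top_set_def by (rule upper_set_eqI) (use kth_weight[of k] kth_weight[of "Suc k"] in simp)
  define E where "E = {a \<in> indices. weight a = ?x}"
  have split: "top_set (Suc k) = upper_set (?x + 1) \<union> E" "upper_set (?x + 1) \<inter> E = {}"
    unfolding top_set_def upper_set_def E_def by auto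
  have "finite E" using finite_top_set split(1) by (metis finite_Un)
  then have "card E = 1"
    using card_top_set[of "Suc k"] card_top_set[of k] split top_k finite_top_set
    by (simp add: card_Un_disjoint)
  then obtain a where "E = {a}" "weight a = ?x" using card_1_singletonE unfolding E_def by blast
  then show ?thesis
    using split top_k \<open>finite E\<close> finite_top_set by (simp add: sum.union_disjoint)
qed

lemma sum_weight_column:
  "(\<Sum>j=1..t. weight (i, j))
    = int m * int (\<Sum>j=1..t. shape_part i j) + int i * int t - int m * int ((t + 1) choose 2)"
proof -
  have "(\<Sum>j=1..t. weight (i, j)) = (\<Sum>j=1..t. int m * int (shape_part i j) - int m * int j + int i)"
    by (simp add: weight_eq algebra_simps)
  also have "\<dots> = int m * (\<Sum>j=1..t. int (shape_part i j)) - int m * (\<Sum>j=1..t. int j) + int i * int t"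
    by (simp add: sum.distrib sum_subtractf sum_distrib_left)
  finally show ?thesis using int_Suc_choose_two[of t] by simp
qed

text \<open>By Greene's theorem the last summand is nonpositive, and it vanishes for the choices
  built from optimal labellings.\<close>
lemma score_eq_weights:
  assumes "length L = k" "card (\<Union> (snd ` set L)) = (\<Sum>i<m. cU i)"
  shows "score m L = int ((k + 1) choose 2) + (\<Sum>i<m. \<Sum>j=1..num_color L i. weight (i, j))
    + int m * (\<Sum>i<m. int (cU i) - int (\<Sum>j=1..num_color L i. shape_part i j))"
proof -
  have "(\<Sum>i<m. \<Sum>j=1..num_color L i. weight (i, j))
    = (\<Sum>i<m. int m * int (\<Sum>j=1..num_color L i. shape_part i j)
        + (int i * int (num_color L i) - int m * int ((num_color L i + 1) choose 2)))"
    using sum_weight_column[where t = "num_color L i" and i = i for i]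
    by (intro sum.cong) (simp_all only: add_diff_eq)
  then show ?thesis
    using assms unfolding score_def
    by (simp add: sum.distrib sum_subtractf sum_distrib_left algebra_simps)
qed

lemma sum_weight_staircase:
  "(\<Sum>i<m. \<Sum>j=1..K i. weight (i, j)) = sum weight (SIGMA i:{..<m}. {1..K i})"
  and card_staircase: "card (SIGMA i:{..<m}. {1..K i}) = (\<Sum>i<m. K i)"
  and staircase_subset: "(SIGMA i:{..<m}. {1..K i}) \<subseteq> indices"
  by (simp_all add: sum.Sigma indices_def) auto

lemma score_le_top_set:
  assumes L: "L \<in> choices m w c k"
  shows "score m L \<le> int ((k + 1) choose 2) + sum weight (top_set k)"
proof -
  have len: "length L = k" using L unfolding choices_def by simp
  have "card (color_union L i) \<le> (\<Sum>j=1..num_color L i. shape_part i j)" for i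
  proof -
    obtain f where "incr_labelling w {a. a < k \<and> fst (L ! a) = i} (color_union L i) f"
      using color_union_labelling[OF L] by blast
    then have "card (color_union L i)
        \<le> (\<Sum>j=1..card {a. a < k \<and> fst (L ! a) = i}. part (rs_shape (color_word w c i)) j)"
      by (rule color_greene_card_le[OF distinct_w]) (use color_union_subset[OF L] in auto)
    then show ?thesis unfolding card_color_labels[OF len] shape_part_def .
  qed
  then have "(\<Sum>i<m. int (card (color_union L i)) - int (\<Sum>j=1..num_color L i. shape_part i j)) \<le> 0"
    by (intro sum_nonpos) (simp del: of_nat_sum)
  then have "int m * (\<Sum>i<m. int (card (color_union L i)) - int (\<Sum>j=1..num_color L i. shape_part i j)) \<le> 0"
    by (simp add: mult_nonneg_nonpos)
  then have "score m L \<le> int ((k + 1) choose 2) + (\<Sum>i<m. \<Sum>j=1..num_color L i. weight (i, j))"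
    using score_eq_weights[OF len card_Union_choice[OF L]] by linarith
  also have "(\<Sum>i<m. \<Sum>j=1..num_color L i. weight (i, j)) \<le> sum weight (top_set k)"
    unfolding sum_weight_staircase using choices_fst_less[OF L] len
    by (intro sum_weight_le_top_set staircase_subset) (simp_all add: card_staircase sum_num_color)
  finally show ?thesis by simp
qed

lemma top_set_column: "i < m \<Longrightarrow> {j. (i, j) \<in> top_set k} = {1..card {j. (i, j) \<in> top_set k}}"
proof (rule down_closed_eq_atLeastAtMost)
  have "{j. (i, j) \<in> top_set k} \<subseteq> snd ` top_set k" by force
  then show "finite {j. (i, j) \<in> top_set k}"
    using finite_subset finite_top_set by blast
  show "0 \<notin> {j. (i, j) \<in> top_set k}"
    using top_set_subset unfolding indices_def by auto
  fix j j' assume "j \<in> {j. (i, j) \<in> top_set k}" "1 \<le> j'" "j' \<le> j" "i < m"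
  then show "j' \<in> {j. (i, j) \<in> top_set k}"
    using weight_strict_antimono[of j' j i] unfolding top_set_def upper_set_def indices_def
    by (cases "j' = j") auto
qed

definition top_height :: "nat \<Rightarrow> nat \<Rightarrow> nat" where
  "top_height k i = card {j. (i, j) \<in> top_set k}"

lemma top_set_staircase: "top_set k = (SIGMA i:{..<m}. {1..top_height k i})"
proof -
  have "(i, j) \<in> top_set k \<longleftrightarrow> i < m \<and> j \<in> {1..top_height k i}" for i j
    using top_set_column[of i k] top_set_subset unfolding top_height_def indices_def by blast
  then show ?thesis by auto
qed

lemma score_top_set_attained:
  "\<exists>L \<in> choices m w c k. score m L = int ((k + 1) choose 2) + sum weight (top_set k)"
proof -
  let ?K = "top_height k"
  have "\<exists>S f. incr_labelling w {..<?K i} S f \<and> S \<subseteq> {p. c ! p = i}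
    \<and> card S = (\<Sum>j=1..?K i. shape_part i j)" for i
    using color_greene_labelling_exists[OF distinct_w] unfolding shape_part_def by blast
  then obtain S f where lab: "\<And>i. incr_labelling w {..<?K i} (S i) (f i)"
    and col: "\<And>i. S i \<subseteq> {p. c ! p = i}" and card: "\<And>i. card (S i) = (\<Sum>j=1..?K i. shape_part i j)"
    by metis
  have "(\<Sum>i<m. ?K i) = k"
    using card_top_set[of k] unfolding top_set_staircase by (simp add: card_staircase)
  define L where "L = labelled_choice m ?K S f"
  have "L \<in> choices m w c (\<Sum>i<m. ?K i)"
    unfolding L_def by (rule labelled_choice_in_choices) (simp_all add: lab col)
  then have L: "L \<in> choices m w c k"
    using \<open>(\<Sum>i<m. ?K i) = k\<close> by simp
  have "f i ` S i \<subseteq> {..<?K i}" for i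
    using lab[of i] unfolding incr_labelling_def by (elim conjE)
  then have num: "\<forall>i<m. num_color L i = ?K i \<and> color_union L i = S i"
    unfolding L_def using num_color_labelled_choice color_union_labelled_choice by simp
  have "score m L = int ((k + 1) choose 2) + (\<Sum>i<m. \<Sum>j=1..num_color L i. weight (i, j))"
    using score_eq_weights[OF _ card_Union_choice[OF L]] L num card unfolding choices_def by simp
  also have "\<dots> = int ((k + 1) choose 2) + sum weight (top_set k)"
    using num unfolding top_set_staircase sum_weight_staircase[symmetric] by simp
  finally show ?thesis using L by blast
qed

lemma finite_choices: "finite (choices m w c k)"
proof (rule finite_subset)
  show "choices m w c k \<subseteq> {L. set L \<subseteq> {..<m} \<times> Pow {..<length w} \<and> length L = k}"
    unfolding choices_def mono_incr_def by (fastforce simp: in_set_conv_nth)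
  show "finite {L. set L \<subseteq> {..<m} \<times> Pow {..<length w} \<and> length L = k}"
    by (rule finite_lists_length_eq) simp
qed

lemma l_val_eq: "l_val m w c k = int ((k + 1) choose 2) + sum weight (top_set k)"
  unfolding l_val_def
proof (rule Max_eqI)
  show "finite (score m ` choices m w c k)" using finite_choices by simp
  show "y \<le> int ((k + 1) choose 2) + sum weight (top_set k)" if "y \<in> score m ` choices m w c k" for y
    using score_le_top_set that by auto
  show "int ((k + 1) choose 2) + sum weight (top_set k) \<in> score m ` choices m w c k"
    using score_top_set_attained by (metis image_eqI)
qed

lemma lam_eq: "1 \<le> k \<Longrightarrow> lam m w c k = int k + kth_weight k"
proof -
  assume "1 \<le> k"
  then obtain k' where k: "k = Suc k'" by (cases k) auto
  have "int ((k + 1) choose 2) = int ((k' + 1) choose 2) + int k"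
    using k by (simp add: numeral_2_eq_2)
  then show ?thesis
    unfolding lam_def l_val_eq using sum_weight_top_set_Suc[of k'] k by simp
qed

lemma kth_largest_weight: "1 \<le> k \<Longrightarrow> kth_largest indices weight k (lam m w c k - int k)"
proof -
  assume k: "1 \<le> k"
  have "{a \<in> indices. kth_weight k \<le> weight a} = upper_set (kth_weight k)"
    and "{a \<in> indices. kth_weight k < weight a} = upper_set (kth_weight k + 1)"
    unfolding upper_set_def by auto
  then show ?thesis
    unfolding kth_largest_def lam_eq[OF k]
    using finite_upper_set kth_weight[of k] k unfolding count_ge_def by simp
qed

lemma weight_eq_base: "weight a = base a + int m * int (shape_part (fst a) (snd a))"
  by (cases a) (simp add: weight_eq base_def algebra_simps)

lemma sum_shape_part_enum_index:
  assumes "m * n \<le> K"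
  shows "(\<Sum>a\<in>enum_index ` {..<K}. shape_part (fst a) (snd a)) = n"
proof -
  let ?box = "SIGMA i:{..<m}. {1..n}"
  have "(\<Sum>a\<in>enum_index ` {..<K}. shape_part (fst a) (snd a)) = (\<Sum>a\<in>?box. shape_part (fst a) (snd a))"
  proof (rule sum.mono_neutral_right)
    show "?box \<subseteq> enum_index ` {..<K}"
      unfolding enum_index_lessThan indices_def base_def
    proof clarsimp
      fix i j assume "i < m" "Suc 0 \<le> j" "j \<le> n"
      then have "int m * int j \<le> int K"
        using assms mult_le_mono2[of j n m] by (metis of_nat_le_iff of_nat_mult order_trans)
      then show "- int K \<le> int i - int m * int j" by simp
    qed
    show "\<forall>a\<in>enum_index ` {..<K} - ?box. shape_part (fst a) (snd a) = 0"
    proof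
      fix a assume a: "a \<in> enum_index ` {..<K} - ?box"
      then have "a \<in> indices" using enum_index_in_indices by auto
      then have "fst a < m" "1 \<le> snd a" unfolding indices_def by auto
      then have "n < snd a" using a by (cases a) auto
      then show "shape_part (fst a) (snd a) = 0" by (rule shape_part_eq_0)
    qed
  qed simp
  also have "\<dots> = (\<Sum>i<m. \<Sum>j=1..n. shape_part i j)"
    by (simp add: sum.cartesian_product case_prod_beta)
  also have "\<dots> = (\<Sum>i<m. length (color_word w c i))"
    using sum_shape_part_total by simp
  finally show ?thesis using sum_length_color_word by simp
qed

lemma l_val_large: "m * n < K \<Longrightarrow> l_val m w c K = int (m * n)"
proof -
  assume K: "m * n < K"
  have top: "top_set K = enum_index ` {..<K}"
    unfolding top_set_def kth_weight_low[OF K] using upper_set_low K by simp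
  have "sum weight (top_set K) = (\<Sum>q<K. weight (enum_index q))"
    unfolding top by (rule sum.reindex[OF inj_on_subset[OF inj_enum_index subset_UNIV], unfolded comp_def])
  also have "\<dots> = - (\<Sum>q<K. int q + 1) + int m * int (\<Sum>a\<in>enum_index ` {..<K}. shape_part (fst a) (snd a))"
    unfolding weight_eq_base base_enum_index
    by (simp add: sum.distrib sum_negf sum_subtractf sum_distrib_left
        sum.reindex[OF inj_on_subset[OF inj_enum_index subset_UNIV]])
  also have "(\<Sum>q<K. int q + 1) = int ((K + 1) choose 2)"
    using int_Suc_choose_two[of K] by (simp add: sum.atLeast1_atMost_eq add.commute)
  finally show ?thesis
    unfolding l_val_eq using sum_shape_part_enum_index K by simp
qed

lemma lam_partition: "is_partition_of (lam m w c) (m * n)"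
  unfolding is_partition_of_def
proof (intro conjI allI impI exI)
  fix k :: nat assume k: "1 \<le> k"
  show "0 \<le> lam m w c k" using lam_eq[OF k] kth_weight[of k] by simp
  show "lam m w c (Suc k) \<le> lam m w c k"
    using lam_eq[OF k] lam_eq[of "Suc k"] kth_weight_strict_antimono[of k] by simp
next
  fix k assume "m * n + 1 < k"
  then show "lam m w c k = 0" using lam_eq[of k] kth_weight_low[of k] by simp
next
  have "(\<Sum>k=1..m * n + 1. lam m w c k) = (\<Sum>k<m * n + 1. l_val m w c (Suc k) - l_val m w c k)"
    unfolding lam_def by (simp add: sum.atLeast1_atMost_eq)
  also have "\<dots> = int (m * n)"
    unfolding sum_lessThan_telescope using l_val_large[of "m * n + 1"] top_set_0 by (simp add: l_val_eq)
  finally show "(\<Sum>k=1..m * n + 1. lam m w c k) = int (m * n)" .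
qed

end

theorem lemma7p1:
  fixes m n :: nat and w c :: "nat list"
  assumes "m \<ge> 1" and "colored_perm m n w c"
  shows "(\<forall>k\<ge>1. kth_largest {(i, j). i < m \<and> j \<ge> 1}
            (\<lambda>(i, j). int m * (int (part (rs_shape (color_word w c i)) j) - int j) + int i)
            k (lam m w c k - int k))
         \<and> is_partition_of (lam m w c) (m * n)"
proof -
  interpret colored_permutation m n w c using assms by unfold_locales
  show ?thesis
    using kth_largest_weight lam_partition unfolding indices_def weight_def by blast
qed

end
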